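(* Let $V$ be a vertex algebra, $g$ an automorphism of $V$ of finite order $T$, $W$ a vector space and $Y_W(\cdot,x):V\to\mathrm{Hom}(W,W((x^{1/T})))$ a linear map satisfying $Y_W(\mathbf 1,x)=\mathrm{id}_W$ and $Y_W(gv,x)=\lim_{x^{1/T}\to\omega_T^{-1}x^{1/T}}Y_W(v,x)$ for all $v\in V$ (where $\omega_T=e^{-2\pi\sqrt{-1}/T}$). Then the following are equivalent: (a) for any $u,v\in V$ there is $k\in\mathbb N$ with $(x_1-x_2)^kY_W(u,x_1)Y_W(v,x_2)\in\mathrm{Hom}(W,W((x_1^{1/T},x_2^{1/T})))$ and $x_2^k(e^{x_0}-1)^kY_W(Y(u,x_0)v,x_2)=\big((x_1-x_2)^kY_W(u,x_1)Y_W(v,x_2)\big)\big|_{x_1^{1/T}=(x_2e^{x_0})^{1/T}}$; (b) (weak $g$-twisted $\phi$-associativity) for any $u\in V^r$, $v\in V$, $w\in W$ there exists $l\in\mathbb N$ such that $(z+1)^{l+r/T}Y_W(u,(z+1)x_2)Y_W(v,x_2)w=(1+z)^{l+r/T}Y_W(Y(u,\log(1+z))v,x_2)w.$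
   Context: $V$ is a vertex algebra with vacuum $\mathbf 1$ and $Y(v,x)=\sum_{k\in\mathbb Z}v_kx^{-k-1}$; $g$ is an automorphism ($g\mathbf 1=\mathbf 1$, $gY(u,x)v=Y(gu,x)gv$) with $g^T=1$, and $V^r=\{v: gv=e^{-2\pi\sqrt{-1}r/T}v\}$ for $r\in\{0,\dots,T-1\}$. Binomial convention: $(a+b)^\alpha$ is expanded in nonnegative integral powers of the second summand $b$; thus $(z+1)^\alpha=\sum_k\binom{\alpha}{k}z^{\alpha-k}$ and $(1+z)^\alpha=\sum_k\binom{\alpha}{k}z^k$, and $Y_W(u,(z+1)x_2)=\sum_n u_n(z+1)^{-n-1}x_2^{-n-1}$ with the same convention. $Y(u,\log(1+z))v$ is $Y(u,x)v\in V((x))$ with $x=\log(1+z)$ substituted. The substitution $x_1^{1/T}=(x_2e^{x_0})^{1/T}$ sends $x_1^{j/T}$ to $x_2^{j/T}e^{jx_0/T}$. *)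

theory Defs
  imports Complex_Main "HOL-Library.Groups_Big_Fun"
    "HOL-Computational_Algebra.Formal_Laurent_Series"
begin

text \<open>The vertex operator of V is encoded by its modes:
  Y u v n = u_n v, so that Y(u,x)v = sum over n of (Y u v n) x^(-n-1).
  A map Y_W(.,x) : V -> Hom(W, W((x^(1/T)))) is encoded by coefficients:
  YW v w j = coefficient of x^(j/T) in Y_W(v,x)w.\<close>

definition vertex_algebra ::
  "(complex \<Rightarrow> 'v::ab_group_add \<Rightarrow> 'v) \<Rightarrow> ('v \<Rightarrow> 'v \<Rightarrow> int \<Rightarrow> 'v) \<Rightarrow> 'v \<Rightarrow> bool" where
  "vertex_algebra smul Y vac \<longleftrightarrow>
     vector_space smul \<and>
     (\<forall>v n. Vector_Spaces.linear smul smul (\<lambda>u. Y u v n)) \<and>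
     (\<forall>u n. Vector_Spaces.linear smul smul (\<lambda>v. Y u v n)) \<and>
     (\<forall>u v. \<exists>N. \<forall>n\<ge>N. Y u v n = 0) \<and>
     (\<forall>v n. Y vac v n = (if n = -1 then v else 0)) \<and>
     (\<forall>v n. n \<ge> 0 \<longrightarrow> Y v vac n = 0) \<and> (\<forall>v. Y v vac (-1) = v) \<and>
     \<comment> \<open>Jacobi identity, in its equivalent component (Borcherds) form\<close>
     (\<forall>u v w m n r.
        Sum_any (\<lambda>i::nat. smul ((of_int m) gchoose i) (Y (Y u v (r + int i)) w (m + n - int i)))
        = Sum_any (\<lambda>i::nat. smul ((-1)^i * ((of_int r) gchoose i)) (Y u (Y v w (n + int i)) (m + r - int i)))
          - Sum_any (\<lambda>i::nat. smul ((-1) powi (r + int i) * ((of_int r) gchoose i))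
                                  (Y v (Y u w (m + int i)) (n + r - int i))))"

definition va_automorphism ::
  "(complex \<Rightarrow> 'v::ab_group_add \<Rightarrow> 'v) \<Rightarrow> ('v \<Rightarrow> 'v \<Rightarrow> int \<Rightarrow> 'v) \<Rightarrow> 'v \<Rightarrow> ('v \<Rightarrow> 'v) \<Rightarrow> bool" where
  "va_automorphism smul Y vac g \<longleftrightarrow>
     Vector_Spaces.linear smul smul g \<and> bij g \<and> g vac = vac \<and>
     (\<forall>u v n. g (Y u v n) = Y (g u) (g v) n)"

definition eigenspace_Vr ::
  "(complex \<Rightarrow> 'v \<Rightarrow> 'v) \<Rightarrow> ('v \<Rightarrow> 'v) \<Rightarrow> nat \<Rightarrow> nat \<Rightarrow> 'v set" where
  "eigenspace_Vr smul g T r =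
     {v. g v = smul (exp (- 2 * pi * \<i> * of_nat r / of_nat T)) v}"

text \<open>Y_W : V -> Hom(W, W((x^(1/T)))) linear, with Y_W(1,x) = id and the g-twist condition
  Y_W(g v, x) = Y_W(v,x) with x^(1/T) replaced by omega_T^(-1) x^(1/T),
  omega_T = exp(-2 pi i / T); i.e. the x^(j/T) coefficient is multiplied by exp(2 pi i j / T).\<close>
definition twisted_field_map ::
  "(complex \<Rightarrow> 'v::ab_group_add \<Rightarrow> 'v) \<Rightarrow> (complex \<Rightarrow> 'w::ab_group_add \<Rightarrow> 'w) \<Rightarrow> 'v \<Rightarrow> ('v \<Rightarrow> 'v)
    \<Rightarrow> nat \<Rightarrow> ('v \<Rightarrow> 'w \<Rightarrow> int \<Rightarrow> 'w) \<Rightarrow> bool" where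
  "twisted_field_map smul smulW vac g T YW \<longleftrightarrow>
     vector_space smulW \<and>
     (\<forall>w j. Vector_Spaces.linear smul smulW (\<lambda>v. YW v w j)) \<and>
     (\<forall>v j. Vector_Spaces.linear smulW smulW (\<lambda>w. YW v w j)) \<and>
     (\<forall>v w. \<exists>N. \<forall>j<N. YW v w j = 0) \<and>
     (\<forall>w j. YW vac w j = (if j = 0 then w else 0)) \<and>
     (\<forall>v w j. YW (g v) w j = smulW (exp (2 * pi * \<i> * of_int j / of_nat T)) (YW v w j))"

text \<open>Coefficient of x1^(i/T) x2^(j/T) in (x1 - x2)^k Y_W(u,x1) Y_W(v,x2) w.\<close>
definition prodk ::
  "(complex \<Rightarrow> 'w::ab_group_add \<Rightarrow> 'w) \<Rightarrow> nat \<Rightarrow> ('v \<Rightarrow> 'w \<Rightarrow> int \<Rightarrow> 'w) \<Rightarrow> nat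
    \<Rightarrow> 'v \<Rightarrow> 'v \<Rightarrow> 'w \<Rightarrow> int \<Rightarrow> int \<Rightarrow> 'w" where
  "prodk smulW T YW k u v w i j =
     (\<Sum>m\<le>k. smulW ((-1)^m * of_nat (k choose m))
        (YW u (YW v w (j - int T * int m)) (i - int T * int (k - m))))"

text \<open>Membership in W((x1^(1/T), x2^(1/T))): finitely many negative powers in both variables.\<close>
definition in_W_two_var :: "(int \<Rightarrow> int \<Rightarrow> 'w::zero) \<Rightarrow> bool" where
  "in_W_two_var F \<longleftrightarrow> (\<exists>N. \<forall>i j. i < N \<or> j < N \<longrightarrow> F i j = 0)"

text \<open>Coefficient of x0^p x2^(m/T) in x2^k (e^x0 - 1)^k Y_W(Y(u,x0)v, x2) w.\<close>
definition assoc_lhs ::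
  "(complex \<Rightarrow> 'w::ab_group_add \<Rightarrow> 'w) \<Rightarrow> ('v \<Rightarrow> 'v \<Rightarrow> int \<Rightarrow> 'v) \<Rightarrow> nat \<Rightarrow> ('v \<Rightarrow> 'w \<Rightarrow> int \<Rightarrow> 'w)
    \<Rightarrow> nat \<Rightarrow> 'v \<Rightarrow> 'v \<Rightarrow> 'w \<Rightarrow> int \<Rightarrow> int \<Rightarrow> 'w" where
  "assoc_lhs smulW Y T YW k u v w p m =
     Sum_any (\<lambda>q::nat. smulW (fps_nth ((fps_exp (1::complex) - 1) ^ k) q)
                          (YW (Y u v (int q - p - 1)) w (m - int T * int k)))"

text \<open>Coefficient of x0^p x2^(m/T) in F(x1,x2) with x1^(1/T) = (x2 e^x0)^(1/T), i.e.
  x1^(i/T) replaced by x2^(i/T) e^(i x0 / T).\<close>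
definition subst_x1 ::
  "(complex \<Rightarrow> 'w::ab_group_add \<Rightarrow> 'w) \<Rightarrow> nat \<Rightarrow> (int \<Rightarrow> int \<Rightarrow> 'w) \<Rightarrow> int \<Rightarrow> int \<Rightarrow> 'w" where
  "subst_x1 smulW T F p m =
     (if p < 0 then 0 else
        Sum_any (\<lambda>i::int. smulW ((of_int i / of_nat T) ^ nat p / of_nat (fact (nat p))) (F i (m - i))))"

text \<open>Coefficient of z^(e/T) x2^(c/T) in (z+1)^(l+r/T) Y_W(u,(z+1)x2) Y_W(v,x2) w, where
  (z+1)^a = sum_k (a choose k) z^(a-k) (expansion in nonnegative powers of 1).
  Index K is the total degree drop from the two binomial factors.\<close>
definition phi_lhs ::
  "(complex \<Rightarrow> 'w::ab_group_add \<Rightarrow> 'w) \<Rightarrow> nat \<Rightarrow> ('v \<Rightarrow> 'w \<Rightarrow> int \<Rightarrow> 'w)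
    \<Rightarrow> nat \<Rightarrow> nat \<Rightarrow> 'v \<Rightarrow> 'v \<Rightarrow> 'w \<Rightarrow> int \<Rightarrow> int \<Rightarrow> 'w" where
  "phi_lhs smulW T YW l r u v w e c =
     Sum_any (\<lambda>K::nat.
        let j = e - int l * int T - int r + int K * int T in
        smulW (\<Sum>k\<le>K. ((of_nat l + of_nat r / of_nat T :: complex) gchoose k)
                        * ((of_int j / of_nat T) gchoose (K - k)))
              (YW u (YW v w (c - j)) j))"

text \<open>Coefficient of z^(e/T) x2^(c/T) in (1+z)^(l+r/T) Y_W(Y(u, log(1+z)) v, x2) w,
  with (1+z)^a = sum_k (a choose k) z^k and log(1+z) = fps_ln 1.\<close>
definition phi_rhs ::
  "(complex \<Rightarrow> 'w::ab_group_add \<Rightarrow> 'w) \<Rightarrow> ('v \<Rightarrow> 'v \<Rightarrow> int \<Rightarrow> 'v) \<Rightarrow> nat \<Rightarrow> ('v \<Rightarrow> 'w \<Rightarrow> int \<Rightarrow> 'w)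
    \<Rightarrow> nat \<Rightarrow> nat \<Rightarrow> 'v \<Rightarrow> 'v \<Rightarrow> 'w \<Rightarrow> int \<Rightarrow> int \<Rightarrow> 'w" where
  "phi_rhs smulW Y T YW l r u v w e c =
     (if int T dvd e then
        Sum_any (\<lambda>(k::nat, n::int).
          smulW (((of_nat l + of_nat r / of_nat T :: complex) gchoose k)
                 * fls_nth ((fps_to_fls (fps_ln (1::complex))) powi (- n - 1)) (e div int T - int k))
                (YW (Y u v n) w c))
      else 0)"

end

theory Submission
  imports Defs
begin

(* Both conditions are one identity between formal series, written in two coordinates.
   For u in V^r only the powers x1^(s - r/T) occur in Y_W(u,x1) Y_W(v,x2) w, so at fixed total
   degree its coefficients form a series H(x) = sum_s H_s x^s, and those of Y_W(Y(u,x0)v,x2) w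
   a series A(x0) = sum_n A_n x0^(-n-1). Condition (a) says that D(x) = (x - 1)^k H(x) is a
   Laurent polynomial with (e^x0 - 1)^k A(x0) = e^(-r x0/T) D(e^x0); condition (b) says that
   (z + 1)^l H(z + 1) = (1 + z)^(l + r/T) A(log(1 + z)). The substitutions x0 = log(1 + z) and
   z = e^x0 - 1 turn each into the other, (x - 1)^k becoming z^k; the exponent l comes from the
   lowest power of D, and k from the truncation of Y(u,x0)v. A general u is the sum of its
   projections onto the eigenspaces V^r, and (a) is additive in u. *)

section \<open>The power series of \<open>e^x - 1\<close> and \<open>log(1 + x)\<close>\<close>

definition fps_expm1 :: "'a::field_char_0 fps" where
  "fps_expm1 = fps_exp 1 - 1"

definition fps_ln1p :: "'a::field_char_0 fps" where
  "fps_ln1p = fps_ln 1"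

definition expm1_div_X :: "'a::field_char_0 fps" where
  "expm1_div_X = fps_shift 1 fps_expm1"

definition ln1p_div_X :: "'a::field_char_0 fps" where
  "ln1p_div_X = fps_shift 1 fps_ln1p"

lemma fps_expm1_nth_0 [simp]: "fps_expm1 $ 0 = 0"
  by (simp add: fps_expm1_def)

lemma fps_ln1p_nth_0 [simp]: "fps_ln1p $ 0 = 0"
  by (simp add: fps_ln1p_def)

lemma expm1_div_X_nth_0 [simp]: "expm1_div_X $ 0 = 1"
  by (simp add: expm1_div_X_def fps_expm1_def)

lemma ln1p_div_X_nth_0 [simp]: "ln1p_div_X $ 0 = 1"
  by (simp add: ln1p_div_X_def fps_ln1p_def fps_ln_nth)

lemma fps_expm1_eq_X_times: "fps_expm1 = fps_X * expm1_div_X"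
  by (rule fps_ext) (simp add: expm1_div_X_def fps_X_mult_nth)

lemma fps_ln1p_eq_X_times: "fps_ln1p = fps_X * ln1p_div_X"
  by (rule fps_ext) (simp add: ln1p_div_X_def fps_X_mult_nth)

lemma fps_ln1p_compose_expm1: "fps_ln1p oo fps_expm1 = (fps_X :: 'a::field_char_0 fps)"
  using fps_inv_fps_exp_compose(1)[of "1::'a"] fps_ln_fps_exp_inv[of "1::'a"]
  by (simp add: fps_ln1p_def fps_expm1_def)

lemma fps_expm1_compose_ln1p: "fps_expm1 oo fps_ln1p = (fps_X :: 'a::field_char_0 fps)"
  using fps_inv_fps_exp_compose(2)[of "1::'a"] fps_ln_fps_exp_inv[of "1::'a"]
  by (simp add: fps_ln1p_def fps_expm1_def)

text \<open>Both sides solve the ODE \<open>f' = a f\<close> with \<open>f(0) = 1\<close>.\<close>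
lemma fps_binomial_compose_expm1: "fps_binomial a oo fps_expm1 = fps_exp (a::'a::field_char_0)"
proof -
  let ?f = "fps_binomial a oo fps_expm1"
  have expm1_deriv: "fps_deriv fps_expm1 = 1 + (fps_expm1 :: 'a fps)"
    by (simp add: fps_expm1_def)
  have binomial_ODE: "fps_deriv (fps_binomial a) * (1 + fps_X) = fps_const a * fps_binomial a"
    using fps_binomial_deriv[of a] by (simp add: fps_divide_def mult.assoc inverse_mult_eq_1)
  have "(fps_deriv (fps_binomial a) * (1 + fps_X)) oo fps_expm1
      = (fps_deriv (fps_binomial a) oo fps_expm1) * (1 + fps_expm1)"
    by (simp add: fps_compose_mult_distrib fps_compose_add_distrib)
  hence "fps_deriv ?f = fps_const a * ?f"
    using binomial_ODE by (simp add: fps_compose_deriv expm1_deriv fps_compose_mult_distrib)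
  hence "?f = fps_const (?f $ 0) * fps_exp a"
    using fps_exp_unique_ODE by blast
  thus ?thesis by simp
qed

lemma fps_exp_compose_ln1p: "fps_exp a oo fps_ln1p = fps_binomial (a::'a::field_char_0)"
proof -
  have "fps_binomial a oo (fps_expm1 oo fps_ln1p) = (fps_binomial a oo fps_expm1) oo fps_ln1p"
    by (rule fps_compose_assoc) simp_all
  thus ?thesis by (simp add: fps_expm1_compose_ln1p fps_binomial_compose_expm1)
qed

lemma ln1p_div_X_compose_expm1:
  "ln1p_div_X oo fps_expm1 = inverse (expm1_div_X :: 'a::field_char_0 fps)"
proof -
  have "fps_X * (expm1_div_X * (ln1p_div_X oo fps_expm1)) = fps_X * (1 :: 'a fps)"
    using fps_ln1p_compose_expm1
    by (simp add: fps_ln1p_eq_X_times fps_compose_mult_distrib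
        fps_expm1_eq_X_times[symmetric] mult.assoc[symmetric])
  hence "expm1_div_X * (ln1p_div_X oo fps_expm1) = (1 :: 'a fps)"
    by simp
  thus ?thesis by (rule fps_inverse_unique[symmetric])
qed

lemma expm1_div_X_compose_ln1p:
  "expm1_div_X oo fps_ln1p = inverse (ln1p_div_X :: 'a::field_char_0 fps)"
proof -
  have "fps_X * (ln1p_div_X * (expm1_div_X oo fps_ln1p)) = fps_X * (1 :: 'a fps)"
    using fps_expm1_compose_ln1p
    by (simp add: fps_expm1_eq_X_times fps_compose_mult_distrib
        fps_ln1p_eq_X_times[symmetric] mult.assoc[symmetric])
  hence "ln1p_div_X * (expm1_div_X oo fps_ln1p) = (1 :: 'a fps)"
    by simp
  thus ?thesis by (rule fps_inverse_unique[symmetric])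
qed

lemma fps_mult_compose_nth:
  fixes F G b :: "'a::field fps"
  assumes b0: "b $ 0 = 0"
  shows "(G * (F oo b)) $ n = (\<Sum>i=0..n. F $ i * (G * b ^ i) $ n)"
proof -
  let ?P = "\<Sum>i=0..n. fps_const (F $ i) * b ^ i"
  have agree: "(F oo b) $ q = ?P $ q" if "q \<le> n" for q
  proof -
    have "?P $ q = (\<Sum>i=0..n. F $ i * (b ^ i) $ q)"
      by (simp add: fps_sum_nth)
    also have "\<dots> = (\<Sum>i=0..q. F $ i * (b ^ i) $ q)"
      using that startsby_zero_power_prefix[OF b0] by (intro sum.mono_neutral_right) auto
    finally show ?thesis by (simp add: fps_compose_nth)
  qed
  have "(G * (F oo b)) $ n = (G * ?P) $ n"
    unfolding fps_mult_nth by (intro sum.cong refl) (simp add: agree)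
  also have "\<dots> = (\<Sum>i=0..n. F $ i * (G * b ^ i) $ n)"
  proof -
    have "(G * (fps_const c * B)) $ n = c * (G * B) $ n" for c and B :: "'a fps"
      by (metis fps_mult_left_const_nth mult.left_commute)
    thus ?thesis by (simp add: sum_distrib_left fps_sum_nth)
  qed
  finally show ?thesis .
qed

definition fps_powi :: "'a::field fps \<Rightarrow> int \<Rightarrow> 'a fps" where
  "fps_powi f m = (if m \<ge> 0 then f ^ nat m else inverse f ^ nat (- m))"

lemma fps_powi_of_nat [simp]: "fps_powi f (int j) = f ^ j"
  by (simp add: fps_powi_def)

lemma fps_powi_uminus_of_nat: "fps_powi f (- int j) = inverse f ^ j"
  by (cases "j = 0") (simp_all add: fps_powi_def)

lemma fps_to_fls_powi:
  assumes "f $ 0 \<noteq> 0"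
  shows "fps_to_fls (fps_powi f m) = fps_to_fls f powi m"
proof -
  have "inverse (fps_to_fls f) = fps_to_fls (inverse f)"
    using assms by (intro fls_inverse_fps_to_fls) (simp add: subdegree_eq_0_iff)
  thus ?thesis
    by (simp add: fps_powi_def power_int_def fps_to_fls_power)
qed

lemma fps_power_mult_powi:
  assumes "f $ 0 \<noteq> 0"
  shows "f ^ j * fps_powi f m = fps_powi f (int j + m)"
proof -
  have "fps_to_fls f \<noteq> 0"
    using assms by auto
  hence "fps_to_fls (f ^ j * fps_powi f m) = fps_to_fls (fps_powi f (int j + m))"
    using assms by (simp add: fls_times_fps_to_fls fps_to_fls_power fps_to_fls_powi power_int_add)
  thus ?thesis by simp
qed

lemma fps_powi_inverse:
  assumes "f $ 0 \<noteq> 0"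
  shows "fps_powi (inverse f) m = fps_powi f (- m)"
proof -
  have "fps_to_fls (fps_powi (inverse f) m) = fps_to_fls (fps_powi f (- m))"
    using assms by (simp add: fps_to_fls_powi fls_inverse_fps_to_fls[symmetric] subdegree_eq_0_iff
        power_int_minus power_int_inverse)
  thus ?thesis by simp
qed

lemma fps_powi_compose:
  assumes "b $ 0 = 0" "f $ 0 \<noteq> 0"
  shows "fps_powi f m oo b = fps_powi (f oo b) m"
  using assms by (simp add: fps_powi_def fps_compose_power[symmetric] fps_inverse_compose)

lemma fps_ln1p_powi_nth:
  "fls_nth (fps_to_fls fps_ln1p powi m) t = (if t < m then 0 else fps_powi ln1p_div_X m $ nat (t - m))"
proof -
  have "fps_to_fls fps_ln1p powi m = (fls_X * fps_to_fls ln1p_div_X) powi m"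
    by (simp add: fps_ln1p_eq_X_times fls_times_fps_to_fls)
  also have "\<dots> = fls_X_intpow m * fps_to_fls (fps_powi ln1p_div_X m)"
    by (simp only: power_int_mult_distrib fls_X_power_int) (simp add: fps_to_fls_powi)
  also have "\<dots> = fls_shift (- m) (fps_to_fls (fps_powi ln1p_div_X m))"
    by (rule fls_X_intpow_times_conv_shift)
  finally have powi_eq: "fps_to_fls fps_ln1p powi m = fls_shift (- m) (fps_to_fls (fps_powi ln1p_div_X m))" .
  show ?thesis
    by (simp only: powi_eq fls_shift_nth fps_to_fls_nth) simp
qed

text \<open>For \<open>n < k\<close> these are the power series \<open>(1 + z)^a z^k log(1 + z)^(-n-1)\<close> and
  \<open>(e^x - 1)^k x^(-n-1)\<close>; by the two lemmas below they correspond to each other under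
  \<open>z = e^x - 1\<close>.\<close>
definition ln1p_kernel :: "'a::field_char_0 \<Rightarrow> nat \<Rightarrow> int \<Rightarrow> 'a fps" where
  "ln1p_kernel a k n = fps_binomial a * fps_X ^ nat (int k - n - 1) * fps_powi ln1p_div_X (- n - 1)"

definition expm1_kernel :: "nat \<Rightarrow> int \<Rightarrow> 'a::field_char_0 fps" where
  "expm1_kernel k n = fps_X ^ nat (int k - n - 1) * expm1_div_X ^ k"

lemma ln1p_kernel_compose_expm1:
  assumes "n < int k"
  shows "fps_exp (- a) * (ln1p_kernel a k n oo fps_expm1) = expm1_kernel k n"
proof -
  let ?j = "nat (int k - n - 1)"
  have "ln1p_kernel a k n oo fps_expm1
      = fps_exp a * fps_expm1 ^ ?j * fps_powi (inverse expm1_div_X) (- n - 1)"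
    by (simp add: ln1p_kernel_def fps_compose_mult_distrib fps_compose_power[symmetric]
        fps_binomial_compose_expm1 fps_powi_compose ln1p_div_X_compose_expm1)
  also have "\<dots> = fps_exp a * fps_X ^ ?j * (expm1_div_X ^ ?j * fps_powi expm1_div_X (1 + n))"
    by (simp add: fps_expm1_eq_X_times fps_powi_inverse power_mult_distrib mult_ac)
  also have "expm1_div_X ^ ?j * fps_powi expm1_div_X (1 + n)
      = fps_powi (expm1_div_X :: 'a fps) (int ?j + (1 + n))"
    by (simp add: fps_power_mult_powi)
  also have "int ?j + (1 + n) = int k"
    using assms by simp
  finally show ?thesis
    by (simp add: expm1_kernel_def mult.assoc[symmetric] fps_exp_add_mult[symmetric])
qed

lemma expm1_kernel_compose_ln1p:
  assumes "n < int k"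
  shows "fps_binomial a * (expm1_kernel k n oo fps_ln1p) = ln1p_kernel a k n"
proof -
  let ?j = "nat (int k - n - 1)"
  have "expm1_kernel k n oo fps_ln1p = fps_ln1p ^ ?j * inverse ln1p_div_X ^ k"
    by (simp add: expm1_kernel_def fps_compose_mult_distrib fps_compose_power[symmetric]
        expm1_div_X_compose_ln1p)
  also have "\<dots> = fps_X ^ ?j * (ln1p_div_X ^ ?j * fps_powi ln1p_div_X (- int k))"
    by (simp add: fps_ln1p_eq_X_times fps_powi_uminus_of_nat power_mult_distrib mult_ac)
  also have "ln1p_div_X ^ ?j * fps_powi ln1p_div_X (- int k) = fps_powi (ln1p_div_X :: 'a fps) (- n - 1)"
    using assms by (simp add: fps_power_mult_powi)
  finally show ?thesis
    by (simp add: ln1p_kernel_def mult.assoc)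
qed

lemma gbinomial_expm1_power_sum:
  "(\<Sum>e=0..p. (N gchoose e) * (fps_exp (- a) * fps_expm1 ^ e) $ p) = (N - a) ^ p / fact p"
proof -
  have "(fps_exp (- a) * (fps_binomial N oo fps_expm1)) $ p
      = (\<Sum>e=0..p. (N gchoose e) * (fps_exp (- a) * fps_expm1 ^ e) $ p)"
    by (subst fps_mult_compose_nth) simp_all
  moreover have "fps_exp (- a) * (fps_binomial N oo fps_expm1) = fps_exp (N - a)"
    by (simp add: fps_binomial_compose_expm1 fps_exp_add_mult[symmetric])
  ultimately show ?thesis by simp
qed

lemma exp_ln1p_power_sum:
  "(\<Sum>p=0..e. ((N - a) ^ p / fact p) * (fps_binomial a * fps_ln1p ^ p) $ e) = N gchoose e"
proof -
  have "(fps_binomial a * (fps_exp (N - a) oo fps_ln1p)) $ e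
      = (\<Sum>p=0..e. ((N - a) ^ p / fact p) * (fps_binomial a * fps_ln1p ^ p) $ e)"
    by (subst fps_mult_compose_nth) simp_all
  moreover have "fps_binomial a * (fps_exp (N - a) oo fps_ln1p) = fps_binomial N"
    by (simp add: fps_exp_compose_ln1p fps_binomial_add_mult[symmetric])
  ultimately show ?thesis by simp
qed

lemma fps_expm1_power_nth_below: "q < k \<Longrightarrow> (fps_expm1 ^ k) $ q = 0"
  using startsby_zero_power_prefix[OF fps_expm1_nth_0] by blast

lemma fps_expm1_power_nth_self: "(fps_expm1 ^ k) $ k = 1"
  by (simp add: fps_expm1_eq_X_times power_mult_distrib fps_X_power_mult_nth fps_power_zeroth)

lemma ln1p_kernel_nth_below: "e < nat (int k - n - 1) \<Longrightarrow> ln1p_kernel a k n $ e = 0"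
  by (simp add: ln1p_kernel_def mult.commute[of _ "fps_X ^ _"] mult.assoc fps_X_power_mult_nth)

lemma expm1_kernel_nth_below: "p < nat (int k - n - 1) \<Longrightarrow> expm1_kernel k n $ p = 0"
  by (simp add: expm1_kernel_def fps_X_power_mult_nth)

lemma expm1_kernel_nth:
  assumes "n < int k"
  shows "(expm1_kernel k n :: 'a::field_char_0 fps) $ p
       = (if n + int p + 1 < 0 then 0 else (fps_expm1 ^ k) $ nat (n + int p + 1))"
proof -
  have "expm1_kernel k n $ p
      = (if p < nat (int k - n - 1) then 0 else (expm1_div_X ^ k) $ (p - nat (int k - n - 1)))"
    by (simp add: expm1_kernel_def fps_X_power_mult_nth)
  moreover have "(fps_expm1 ^ k :: 'a fps) $ q = (if q < k then 0 else (expm1_div_X ^ k) $ (q - k))" for q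
    by (simp add: fps_expm1_eq_X_times power_mult_distrib fps_X_power_mult_nth)
  moreover have "p < nat (int k - n - 1) \<longleftrightarrow> n + int p + 1 < 0 \<or> nat (n + int p + 1) < k"
    using assms by linarith
  moreover have "\<not> p < nat (int k - n - 1) \<Longrightarrow> p - nat (int k - n - 1) = nat (n + int p + 1) - k"
    using assms by linarith
  ultimately show ?thesis by auto
qed

section \<open>Binomial coefficients and sums with finite support\<close>

text \<open>The coefficient of \<open>z^e\<close> in \<open>(z + 1)^n\<close>, expanded in nonnegative powers of \<open>1\<close>.\<close>
definition zp1_coeff :: "int \<Rightarrow> int \<Rightarrow> 'a::field_char_0" where
  "zp1_coeff n e = (if e \<le> n then of_int n gchoose nat (n - e) else 0)"

lemma zp1_coeff_self [simp]: "zp1_coeff n n = 1"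
  by (simp add: zp1_coeff_def)

lemma zp1_coeff_above: "n < e \<Longrightarrow> zp1_coeff n e = 0"
  by (simp add: zp1_coeff_def)

lemma zp1_coeff_pascal: "zp1_coeff (n + 1) e = zp1_coeff n e + zp1_coeff n (e - 1)"
proof (cases "e \<le> n")
  case True
  have "nat (n + 1 - e) = Suc (nat (n - e))" "nat (n - (e - 1)) = Suc (nat (n - e))"
    using True by auto
  thus ?thesis
    using True by (simp add: zp1_coeff_def gbinomial_Suc_Suc)
next
  case False
  thus ?thesis by (cases "e = n + 1") (auto simp: zp1_coeff_def)
qed

lemma zp1_coeff_nonneg:
  assumes "n \<ge> 0"
  shows "zp1_coeff n e = (if e < 0 then 0 else (of_int n :: 'a::field_char_0) gchoose nat e)"
proof -
  obtain N where N: "n = int N"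
    using assms nonneg_int_cases by blast
  have choose: "(of_nat N :: 'a) gchoose j = of_nat (N choose j)" for j
    by (simp add: binomial_gbinomial)
  show ?thesis
  proof (cases "e < 0 \<or> n < e")
    case True
    hence "e < 0 \<and> N < nat (n - e) \<or> e \<ge> 0 \<and> N < nat e"
      using N by auto
    thus ?thesis by (auto simp: zp1_coeff_def N choose binomial_eq_0)
  next
    case False
    hence "nat (n - e) = N - nat e" "nat e \<le> N"
      using N by auto
    thus ?thesis
      using False binomial_symmetric[of "nat e" N] by (simp add: zp1_coeff_def N choose)
  qed
qed

lemma alternating_binomial_sum_Suc:
  fixes g :: "int \<Rightarrow> 'a::comm_ring_1"
  shows "(\<Sum>m\<le>Suc k. (-1)^m * of_nat (Suc k choose m) * g (y - int m))
       = (\<Sum>m\<le>k. (-1)^m * of_nat (k choose m) * g (y - int m))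
       - (\<Sum>m\<le>k. (-1)^m * of_nat (k choose m) * g (y - 1 - int m))"
proof -
  have Suc_k: "(\<Sum>m\<le>Suc k. (-1)^m * of_nat (Suc k choose m) * g (y - int m))
     = g y + (\<Sum>m\<le>k. (-1)^(Suc m) * (of_nat (k choose m) + of_nat (k choose Suc m)) * g (y - 1 - int m))"
    by (subst sum.atMost_Suc_shift) (simp add: algebra_simps)
  have "(\<Sum>m\<le>k. (-1)^m * of_nat (k choose m) * g (y - int m))
     = (\<Sum>m\<le>Suc k. (-1)^m * of_nat (k choose m) * g (y - int m))"
    by (simp add: binomial_eq_0)
  also have "\<dots> = g y + (\<Sum>m\<le>k. (-1)^(Suc m) * of_nat (k choose Suc m) * g (y - 1 - int m))"
    by (subst sum.atMost_Suc_shift) (simp add: algebra_simps)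
  finally have k: "(\<Sum>m\<le>k. (-1)^m * of_nat (k choose m) * g (y - int m))
     = g y + (\<Sum>m\<le>k. (-1)^(Suc m) * of_nat (k choose Suc m) * g (y - 1 - int m))" .
  show ?thesis
    unfolding Suc_k k by (simp add: algebra_simps sum.distrib sum_subtractf sum_negf)
qed

text \<open>Because \<open>(z + 1)^n - (z + 1)^(n - 1) = z (z + 1)^(n - 1)\<close>.\<close>
lemma zp1_coeff_backward_difference:
  "(\<Sum>m\<le>k. (-1)^m * of_nat (k choose m) * zp1_coeff (y - int m) e)
    = (zp1_coeff (y - int k) (e - int k) :: 'a::field_char_0)"
proof (induction k arbitrary: y e)
  case 0
  thus ?case by simp
next
  case (Suc k)
  have "(\<Sum>m\<le>Suc k. (-1)^m * of_nat (Suc k choose m) * zp1_coeff (y - int m) e)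
      = zp1_coeff (y - int k) (e - int k) - (zp1_coeff (y - 1 - int k) (e - int k) :: 'a)"
    using alternating_binomial_sum_Suc[of k "\<lambda>x. zp1_coeff x e :: 'a" y] Suc.IH[of y e] Suc.IH[of "y - 1" e]
    by simp
  also have "\<dots> = zp1_coeff (y - 1 - int k) (e - int k - 1)"
    using zp1_coeff_pascal[of "y - 1 - int k" "e - int k", where 'a='a] by simp
  finally show ?case by (simp add: algebra_simps)
qed

lemma Sum_any_eq_sum: "finite I \<Longrightarrow> (\<And>x. x \<notin> I \<Longrightarrow> f x = 0) \<Longrightarrow> Sum_any f = sum f I"
  by (rule Sum_any.expand_superset) auto

lemma Sum_any_eq_zero: "(\<And>x. f x = 0) \<Longrightarrow> Sum_any f = 0"
  by (simp add: Sum_any.expand_set)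

lemma finite_support_int: "(\<And>x::int. x < a \<or> x > b \<Longrightarrow> f x = 0) \<Longrightarrow> finite {x. f x \<noteq> 0}"
  by (rule finite_subset[of _ "{a..b}"]) (auto simp: not_less[symmetric])

lemma finite_support_nat: "(\<And>x::nat. x > b \<Longrightarrow> f x = 0) \<Longrightarrow> finite {x. f x \<noteq> 0}"
  by (rule finite_subset[of _ "{..b}"]) (auto simp: not_less[symmetric])

lemma Sum_any_sum_swap:
  fixes f :: "'i \<Rightarrow> 'x \<Rightarrow> 'a::comm_monoid_add"
  assumes "finite E" "\<And>e. e \<in> E \<Longrightarrow> finite {x. f e x \<noteq> 0}"
  shows "Sum_any (\<lambda>x. \<Sum>e\<in>E. f e x) = (\<Sum>e\<in>E. Sum_any (f e))"
  using assms
proof (induction E rule: finite_induct)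
  case empty
  thus ?case by simp
next
  case (insert e E)
  have "{x. (\<Sum>e\<in>E. f e x) \<noteq> 0} \<subseteq> (\<Union>e\<in>E. {x. f e x \<noteq> 0})"
    by (auto elim: sum.not_neutral_contains_not_neutral)
  hence "finite {x. (\<Sum>e\<in>E. f e x) \<noteq> 0}"
    by (rule finite_subset) (use insert in auto)
  hence "Sum_any (\<lambda>x. f e x + (\<Sum>e\<in>E. f e x)) = Sum_any (f e) + Sum_any (\<lambda>x. \<Sum>e\<in>E. f e x)"
    by (intro Sum_any.distrib) (use insert in auto)
  thus ?case using insert by simp
qed

lemma Sum_any_int_shift: "Sum_any (f :: int \<Rightarrow> 'a::comm_monoid_add) = Sum_any (\<lambda>t. f (t + c))"
  by (rule Sum_any.reindex_cong[of "\<lambda>t. t + c"])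
    (auto simp: bij_def inj_def surj_def intro: exI[of _ "_ - c"])

lemma Sum_any_nat_as_int:
  fixes f :: "nat \<Rightarrow> 'a::comm_monoid_add"
  assumes "\<And>q. q \<ge> M \<Longrightarrow> f q = 0"
  shows "Sum_any f = Sum_any (\<lambda>n::int. if n \<ge> c then f (nat (n - c)) else 0)"
proof -
  let ?g = "\<lambda>n::int. if n \<ge> c then f (nat (n - c)) else 0"
  let ?h = "\<lambda>q. int q + c"
  have "Sum_any f = sum f {..<M}"
    using assms by (intro Sum_any_eq_sum) auto
  also have "\<dots> = sum (?g \<circ> ?h) {..<M}"
    by (intro sum.cong) auto
  also have "\<dots> = sum ?g (?h ` {..<M})"
    by (rule sum.reindex[symmetric]) (auto simp: inj_on_def)
  also have "\<dots> = Sum_any ?g"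
  proof (rule Sum_any_eq_sum[symmetric])
    fix n assume n: "n \<notin> ?h ` {..<M}"
    show "?g n = 0"
    proof (cases "n \<ge> c")
      case True
      hence "n = ?h (nat (n - c))"
        by simp
      hence "nat (n - c) \<ge> M"
        using n by (metis imageI lessThan_iff not_le)
      thus ?thesis using True assms by simp
    qed simp
  qed simp
  finally show ?thesis .
qed

lemma Sum_any_reindex_residue_class:
  fixes f :: "int \<Rightarrow> 'a::comm_monoid_add"
  assumes "T > (0::nat)" and "\<And>i. f i \<noteq> 0 \<Longrightarrow> int T dvd i + int r"
  shows "Sum_any f = Sum_any (\<lambda>s. f (int T * s - int r))"
proof -
  let ?h = "\<lambda>s. int T * s - int r"
  have inj: "inj ?h"
    using assms(1) by (auto simp: inj_def)
  have "{i. f i \<noteq> 0} = ?h ` {s. f (?h s) \<noteq> 0}"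
  proof (intro set_eqI iffI)
    fix i assume "i \<in> {i. f i \<noteq> 0}"
    hence nz: "f i \<noteq> 0" by simp
    then obtain s where "i + int r = int T * s"
      using assms(2) by (auto elim: dvdE)
    hence "i = ?h s"
      by simp
    thus "i \<in> ?h ` {s. f (?h s) \<noteq> 0}"
      using nz by auto
  qed auto
  hence "sum f {i. f i \<noteq> 0} = sum (f \<circ> ?h) {s. f (?h s) \<noteq> 0}"
    by (simp add: sum.reindex inj_on_subset[OF inj])
  thus ?thesis by (simp add: Sum_any.expand_set)
qed

section \<open>Substitutions on coefficient sequences\<close>

definition ln1p_coeff :: "'a::field_char_0 \<Rightarrow> nat \<Rightarrow> int \<Rightarrow> int \<Rightarrow> 'a" where
  "ln1p_coeff a k e n = (if e < 0 then 0 else ln1p_kernel a k n $ nat e)"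

lemma ln1p_coeff_below: "e < int k - 1 - n \<Longrightarrow> ln1p_coeff a k e n = 0"
  by (cases "e < 0") (simp_all add: ln1p_coeff_def ln1p_kernel_nth_below)

lemma zp1_coeff_expm1_power_sum:
  assumes "int l + s \<ge> 0" and "a = of_nat l + \<rho>"
  shows "(\<Sum>e=0..p. (fps_exp (- a) * fps_expm1 ^ e) $ p * zp1_coeff (int l + s) (int e))
       = (of_int s - \<rho>) ^ p / fact p"
proof -
  have "(\<Sum>e=0..p. (fps_exp (- a) * fps_expm1 ^ e) $ p * zp1_coeff (int l + s) (int e))
      = (of_int (int l + s) - a) ^ p / fact p"
    using assms(1) gbinomial_expm1_power_sum[where p = p and N = "of_int (int l + s)" and a = a]
    by (simp add: zp1_coeff_nonneg mult.commute)
  thus ?thesis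
    using assms(2) by simp
qed

lemma zp1_coeff_ln1p_power_sum:
  assumes "int l + s \<ge> 0" and "e \<ge> 0" and "a = of_nat l + \<rho>"
  shows "(\<Sum>p=0..nat e. (fps_binomial a * fps_ln1p ^ p) $ nat e * (of_int s - \<rho>) ^ p / fact p)
       = zp1_coeff (int l + s) e"
proof -
  have "of_int s - \<rho> = of_int (int l + s) - a"
    using assms(3) by simp
  hence "(\<Sum>p=0..nat e. (fps_binomial a * fps_ln1p ^ p) $ nat e * (of_int s - \<rho>) ^ p / fact p)
      = of_int (int l + s) gchoose nat e"
    using exp_ln1p_power_sum[where e = "nat e" and N = "of_int (int l + s)" and a = a]
    by (simp only:) (simp add: mult.commute)
  thus ?thesis
    using assms(1,2) by (simp add: zp1_coeff_nonneg)
qed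

lemma ln1p_coeff_expm1_power_sum:
  assumes "n < int k"
  shows "(\<Sum>e=0..p. (fps_exp (- a) * fps_expm1 ^ e) $ p * ln1p_coeff a k (int e) n) = expm1_kernel k n $ p"
proof -
  have "(fps_exp (- a) * (ln1p_kernel a k n oo fps_expm1)) $ p
      = (\<Sum>e=0..p. ln1p_kernel a k n $ e * (fps_exp (- a) * fps_expm1 ^ e) $ p)"
    by (rule fps_mult_compose_nth) simp
  thus ?thesis
    using assms by (simp add: ln1p_kernel_compose_expm1 ln1p_coeff_def mult.commute)
qed

lemma expm1_kernel_ln1p_power_sum:
  assumes "n < int k" and "e \<ge> 0"
  shows "(\<Sum>p=0..nat e. (fps_binomial a * fps_ln1p ^ p) $ nat e * expm1_kernel k n $ p) = ln1p_coeff a k e n"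
proof -
  have "(fps_binomial a * (expm1_kernel k n oo fps_ln1p)) $ nat e
      = (\<Sum>p=0..nat e. expm1_kernel k n $ p * (fps_binomial a * fps_ln1p ^ p) $ nat e)"
    by (rule fps_mult_compose_nth) simp
  thus ?thesis
    using assms by (simp add: expm1_kernel_compose_ln1p ln1p_coeff_def mult.commute)
qed

lemma ln1p_coeff_eq_Sum_any:
  assumes "n < int k"
  shows "Sum_any (\<lambda>i::nat. (a gchoose i) * fls_nth (fps_to_fls fps_ln1p powi (- n - 1)) (e - int i))
       = ln1p_coeff (a::'a::field_char_0) k (e + int k) n"
proof -
  define N where "N = nat (e + int k)"
  define j where "j = nat (int k - n - 1)"
  have L_nth: "fls_nth (fps_to_fls fps_ln1p powi (- n - 1)) t
      = (if t < - n - 1 then 0 else fps_powi (ln1p_div_X :: 'a fps) (- n - 1) $ nat (t + n + 1))" for t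
    by (simp add: fps_ln1p_powi_nth algebra_simps)
  have "Sum_any (\<lambda>i::nat. (a gchoose i) * fls_nth (fps_to_fls fps_ln1p powi (- n - 1)) (e - int i))
      = (\<Sum>i=0..N. (a gchoose i) * fls_nth (fps_to_fls fps_ln1p powi (- n - 1)) (e - int i))"
    using assms by (intro Sum_any_eq_sum) (auto simp: L_nth N_def)
  also have "\<dots> = ln1p_coeff a k (e + int k) n"
  proof (cases "e + int k < 0")
    case True
    thus ?thesis
      using assms by (simp add: L_nth ln1p_coeff_def)
  next
    case False
    have "ln1p_kernel a k n = fps_binomial a * (fps_X ^ j * fps_powi ln1p_div_X (- n - 1))"
      by (simp add: ln1p_kernel_def j_def mult.assoc)
    hence "ln1p_coeff a k (e + int k) n
        = (\<Sum>i=0..N. (a gchoose i) * (fps_X ^ j * fps_powi ln1p_div_X (- n - 1)) $ (N - i))"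
      using False by (simp add: ln1p_coeff_def fps_mult_nth N_def)
    also have "\<dots> = (\<Sum>i=0..N. (a gchoose i) * fls_nth (fps_to_fls fps_ln1p powi (- n - 1)) (e - int i))"
    proof (rule sum.cong[OF refl])
      fix i assume "i \<in> {0..N}"
      hence "N - i < j \<longleftrightarrow> e - int i < - n - 1"
        and "\<not> N - i < j \<Longrightarrow> N - (i + j) = nat (e - int i + n + 1)"
        using False assms by (auto simp: N_def j_def)
      thus "(a gchoose i) * (fps_X ^ j * fps_powi ln1p_div_X (- n - 1)) $ (N - i)
          = (a gchoose i) * fls_nth (fps_to_fls fps_ln1p powi (- n - 1)) (e - int i)"
        by (cases "N - i < j") (simp_all add: fps_X_power_mult_nth L_nth)
    qed
    finally show ?thesis ..
  qed
  finally show ?thesis .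
qed

locale char_0_vector_space = vector_space scale
  for scale :: "'a::field_char_0 \<Rightarrow> 'w::ab_group_add \<Rightarrow> 'w"
begin

lemma scale_Sum_any_right:
  "finite {x. f x \<noteq> 0} \<Longrightarrow> scale c (Sum_any f) = Sum_any (\<lambda>x. scale c (f x))"
  by (subst (1 2) Sum_any.expand_superset[of "{x. f x \<noteq> 0}"]) (auto simp: scale_sum_right)

lemma scale_Sum_any_left:
  "finite {x. g x \<noteq> 0} \<Longrightarrow> scale (Sum_any g) v = Sum_any (\<lambda>x. scale (g x) v)"
  by (subst (1 2) Sum_any.expand_superset[of "{x. g x \<noteq> 0}"]) (auto simp: scale_sum_left)

lemma Sum_any_scale_sum_swap:
  assumes "finite E" and "\<And>e. e \<in> E \<Longrightarrow> finite {s. scale (c e s) (D s) \<noteq> 0}"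
  shows "Sum_any (\<lambda>s. scale (\<Sum>e\<in>E. \<gamma> e * c e s) (D s))
       = (\<Sum>e\<in>E. scale (\<gamma> e) (Sum_any (\<lambda>s. scale (c e s) (D s))))"
proof -
  have "Sum_any (\<lambda>s. scale (\<Sum>e\<in>E. \<gamma> e * c e s) (D s))
      = Sum_any (\<lambda>s. \<Sum>e\<in>E. scale (\<gamma> e) (scale (c e s) (D s)))"
    by (simp add: scale_sum_left)
  also have "\<dots> = (\<Sum>e\<in>E. Sum_any (\<lambda>s. scale (\<gamma> e) (scale (c e s) (D s))))"
  proof (rule Sum_any_sum_swap[OF assms(1)])
    fix e assume "e \<in> E"
    show "finite {s. scale (\<gamma> e) (scale (c e s) (D s)) \<noteq> 0}"
      by (rule finite_subset[OF _ assms(2)[OF \<open>e \<in> E\<close>]]) auto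
  qed
  also have "\<dots> = (\<Sum>e\<in>E. scale (\<gamma> e) (Sum_any (\<lambda>s. scale (c e s) (D s))))"
    using assms(2) by (simp add: scale_Sum_any_right)
  finally show ?thesis .
qed

lemma finite_support_scale:
  fixes A :: "int \<Rightarrow> 'w"
  assumes "\<And>n. n \<ge> hi \<Longrightarrow> A n = 0" and "\<And>n. n < lo \<Longrightarrow> c n = 0"
  shows "finite {n. scale (c n) (A n) \<noteq> 0}"
  by (rule finite_support_int[of lo hi]) (auto simp: assms)

text \<open>Coefficient sequences \<open>H :: int \<Rightarrow> 'w\<close> stand for formal series. With \<open>H(x) = \<Sum>\<^sub>s H s x^s\<close>
  and \<open>A(x) = \<Sum>\<^sub>n A n x^(-n-1)\<close>, the following are the coefficient sequences of
  \<open>(x - 1)^k H(x)\<close>, of \<open>(z + 1)^l H(z + 1)\<close> (in the variable \<open>z\<close>),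
  of \<open>(e^x - 1)^k A(x)\<close>, of \<open>\<Sum>\<^sub>s H s e^((s - \<rho>) x)\<close> (coefficient of \<open>x^p\<close>),
  and of \<open>(1 + z)^a z^k A(log(1 + z))\<close> (in the variable \<open>z\<close>).\<close>

definition xm1_pow_mult :: "nat \<Rightarrow> (int \<Rightarrow> 'w) \<Rightarrow> int \<Rightarrow> 'w" where
  "xm1_pow_mult k H s = (\<Sum>m\<le>k. scale ((-1)^m * of_nat (k choose m)) (H (s - int k + int m)))"

definition zp1_subst :: "nat \<Rightarrow> (int \<Rightarrow> 'w) \<Rightarrow> int \<Rightarrow> 'w" where
  "zp1_subst l H e = Sum_any (\<lambda>s. scale (zp1_coeff (int l + s) e) (H s))"

definition expm1_pow_mult :: "nat \<Rightarrow> (int \<Rightarrow> 'w) \<Rightarrow> int \<Rightarrow> 'w" where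
  "expm1_pow_mult k A p = Sum_any (\<lambda>q::nat. scale ((fps_expm1 ^ k) $ q) (A (int q - p - 1)))"

definition exp_subst :: "'a \<Rightarrow> (int \<Rightarrow> 'w) \<Rightarrow> int \<Rightarrow> 'w" where
  "exp_subst \<rho> H p = (if p < 0 then 0 else
     Sum_any (\<lambda>s. scale ((of_int s - \<rho>) ^ nat p / fact (nat p)) (H s)))"

definition ln1p_subst :: "'a \<Rightarrow> nat \<Rightarrow> (int \<Rightarrow> 'w) \<Rightarrow> int \<Rightarrow> 'w" where
  "ln1p_subst a k A e = Sum_any (\<lambda>n. scale (ln1p_coeff a k e n) (A n))"

lemma xm1_pow_mult_above:
  "(\<And>s. s > S \<Longrightarrow> H s = 0) \<Longrightarrow> s > S + int k \<Longrightarrow> xm1_pow_mult k H s = 0"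
  by (simp add: xm1_pow_mult_def)

lemma zp1_subst_xm1_pow_mult:
  assumes H: "\<And>s. s > S \<Longrightarrow> H s = 0"
  shows "zp1_subst l (xm1_pow_mult k H) e = zp1_subst l H (e - int k)"
proof -
  define c where "c m = ((-1)^m * of_nat (k choose m) :: 'a)" for m
  have "zp1_subst l (xm1_pow_mult k H) e
      = Sum_any (\<lambda>s. \<Sum>m\<le>k. scale (zp1_coeff (int l + s) e * c m) (H (s - int k + int m)))"
    unfolding zp1_subst_def xm1_pow_mult_def c_def by (simp add: scale_sum_right)
  also have "\<dots> = (\<Sum>m\<le>k. Sum_any (\<lambda>s. scale (zp1_coeff (int l + s) e * c m) (H (s - int k + int m))))"
  proof (rule Sum_any_sum_swap)
    fix m assume "m \<in> {..k}"
    thus "finite {s. scale (zp1_coeff (int l + s) e * c m) (H (s - int k + int m)) \<noteq> 0}"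
      by (intro finite_support_int[of "e - int l" "S + int k"]) (auto simp: zp1_coeff_def H)
  qed simp
  also have "\<dots> = (\<Sum>m\<le>k. Sum_any (\<lambda>t. scale (c m * zp1_coeff (int l + t + int k - int m) e) (H t)))"
  proof (rule sum.cong[OF refl])
    fix m
    show "Sum_any (\<lambda>s. scale (zp1_coeff (int l + s) e * c m) (H (s - int k + int m)))
        = Sum_any (\<lambda>t. scale (c m * zp1_coeff (int l + t + int k - int m) e) (H t))"
      by (subst Sum_any_int_shift[of _ "int k - int m"]) (simp add: algebra_simps)
  qed
  also have "\<dots> = Sum_any (\<lambda>t. \<Sum>m\<le>k. scale (c m * zp1_coeff (int l + t + int k - int m) e) (H t))"
  proof (rule Sum_any_sum_swap[symmetric])
    fix m assume "m \<in> {..k}"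
    thus "finite {t. scale (c m * zp1_coeff (int l + t + int k - int m) e) (H t) \<noteq> 0}"
      by (intro finite_support_int[of "e - int l - int k" S]) (auto simp: zp1_coeff_def H)
  qed simp
  also have "\<dots> = Sum_any (\<lambda>t. scale (zp1_coeff (int l + t) (e - int k)) (H t))"
  proof (rule Sum_any.cong)
    fix t
    have "(\<Sum>m\<le>k. c m * zp1_coeff (int l + t + int k - int m) e) = zp1_coeff (int l + t) (e - int k)"
      using zp1_coeff_backward_difference[of k "int l + t + int k" e, where 'a='a] by (simp add: c_def)
    thus "(\<Sum>m\<le>k. scale (c m * zp1_coeff (int l + t + int k - int m) e) (H t))
        = scale (zp1_coeff (int l + t) (e - int k)) (H t)"
      by (simp add: scale_sum_left[symmetric])
  qed
  finally show ?thesis by (simp add: zp1_subst_def)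
qed

lemma expm1_pow_mult_neg:
  assumes A: "\<And>n. n \<ge> int k \<Longrightarrow> A n = 0" and "p < 0"
  shows "expm1_pow_mult k A p = 0"
proof -
  have "scale ((fps_expm1 ^ k) $ q) (A (int q - p - 1)) = 0" for q
    using A[of "int q - p - 1"] \<open>p < 0\<close> by (cases "q < k") (auto simp: fps_expm1_power_nth_below)
  thus ?thesis
    unfolding expm1_pow_mult_def by (rule Sum_any_eq_zero)
qed

lemma expm1_pow_mult_eq_kernel_sum:
  assumes A: "\<And>n. n \<ge> int k \<Longrightarrow> A n = 0" and "p \<ge> 0"
  shows "expm1_pow_mult k A p = Sum_any (\<lambda>n. scale (expm1_kernel k n $ nat p) (A n))"
proof -
  let ?f = "\<lambda>q::nat. scale ((fps_expm1 ^ k) $ q) (A (int q - p - 1))"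
  have "expm1_pow_mult k A p = Sum_any (\<lambda>n::int. if n \<ge> - p - 1 then ?f (nat (n - (- p - 1))) else 0)"
    unfolding expm1_pow_mult_def by (rule Sum_any_nat_as_int[of "nat (int k + p + 1)"]) (auto simp: A)
  also have "\<dots> = Sum_any (\<lambda>n. scale (expm1_kernel k n $ nat p) (A n))"
  proof (rule Sum_any.cong)
    fix n
    show "(if n \<ge> - p - 1 then ?f (nat (n - (- p - 1))) else 0) = scale (expm1_kernel k n $ nat p) (A n)"
    proof (cases "n < int k")
      case True
      have "nat (n - (- p - 1)) = nat (n + p + 1)"
        by (rule arg_cong[where f=nat]) simp
      thus ?thesis
        using \<open>p \<ge> 0\<close> True by (auto simp: expm1_kernel_nth)
    qed (simp add: A)
  qed
  finally show ?thesis .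
qed

text \<open>The lowest term of \<open>(e^x - 1)^k\<close> is \<open>x^k\<close>, so a highest nonzero \<open>A n\<close> with
  \<open>n \<ge> k\<close> would reappear as the coefficient of the negative power \<open>x^(k - n - 1)\<close>.\<close>
lemma expm1_pow_mult_vanishes_high:
  assumes A: "\<And>n. n \<ge> N \<Longrightarrow> A n = 0"
    and neg: "\<And>p. p < 0 \<Longrightarrow> expm1_pow_mult k A p = 0"
    and "n \<ge> int k"
  shows "A n = 0"
proof (rule ccontr)
  assume "A n \<noteq> 0"
  define M where "M = {n. n \<ge> int k \<and> A n \<noteq> 0}"
  have "M \<subseteq> {int k..N}"
  proof
    fix x assume "x \<in> M"
    thus "x \<in> {int k..N}"
      using A[of x] by (cases "x \<ge> N") (auto simp: M_def)
  qed
  hence fin: "finite M"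
    by (rule finite_subset) simp
  have "n \<in> M"
    using \<open>n \<ge> int k\<close> \<open>A n \<noteq> 0\<close> by (simp add: M_def)
  define n0 where "n0 = Max M"
  have n0: "n0 \<in> M"
    using \<open>n \<in> M\<close> fin by (auto simp: n0_def intro: Max_in)
  have above: "A m = 0" if "m > n0" "m \<ge> int k" for m
    using Max_ge[OF fin, of m] that by (auto simp: M_def n0_def)
  let ?p = "int k - n0 - 1"
  have "scale ((fps_expm1 ^ k) $ q) (A (int q - ?p - 1)) = (if q = k then A n0 else 0)" for q
    using n0 above[of "int q - ?p - 1"]
    by (cases q k rule: linorder_cases) (auto simp: M_def fps_expm1_power_nth_below fps_expm1_power_nth_self)
  hence "expm1_pow_mult k A ?p = A n0"
    by (simp add: expm1_pow_mult_def)
  moreover have "?p < 0"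
    using n0 by (simp add: M_def)
  ultimately show False
    using neg n0 by (simp add: M_def)
qed

lemma ln1p_subst_neg: "e < 0 \<Longrightarrow> ln1p_subst a k A e = 0"
  by (simp add: ln1p_subst_def ln1p_coeff_def)

text \<open>For \<open>n \<ge> 0\<close> the series \<open>(z + 1)^n\<close> has no negative powers, and for \<open>n < 0\<close> its lowest
  term is \<open>z^n\<close>; so the coefficients at \<open>z^(-1), z^(-2), \<dots>\<close> determine \<open>D\<close> triangularly.\<close>
lemma zp1_subst_neg_imp_vanishing:
  assumes neg: "\<And>e. e < 0 \<Longrightarrow> zp1_subst l D e = 0" and "int l + s < 0"
  shows "D s = 0"
proof -
  have "D (- int l - int (Suc j)) = 0" for j
  proof (induction j rule: less_induct)
    case (less j)
    let ?s = "- int l - int (Suc j)"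
    have "scale (zp1_coeff (int l + s) (- int (Suc j))) (D s) = (if s = ?s then D s else 0)" for s
    proof (cases "s = ?s \<or> int l + s < - int (Suc j) \<or> int l + s \<ge> 0")
      case True
      thus ?thesis by (auto simp: zp1_coeff_above zp1_coeff_nonneg)
    next
      case False
      define j' where "j' = nat (- (int l + s)) - 1"
      have "j' < j" "s = - int l - int (Suc j')"
        using False by (auto simp: j'_def)
      thus ?thesis
        using less.IH[of j'] False by simp
    qed
    hence "zp1_subst l D (- int (Suc j)) = D ?s"
      by (simp add: zp1_subst_def)
    thus ?case
      using neg[of "- int (Suc j)"] by simp
  qed
  from this[of "nat (- (int l + s)) - 1"] show ?thesis
    using \<open>int l + s < 0\<close> by (simp add: algebra_simps)
qed

text \<open>Substituting \<open>z = e^x - 1\<close>, coefficientwise.\<close>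
lemma expm1_pow_mult_eq_exp_subst:
  assumes D_above: "\<And>s. s > S \<Longrightarrow> D s = 0" and D_below: "\<And>s. int l + s < 0 \<Longrightarrow> D s = 0"
    and A: "\<And>n. n \<ge> int k \<Longrightarrow> A n = 0"
    and eq: "\<And>e. zp1_subst l D e = ln1p_subst (of_nat l + \<rho>) k A e"
  shows "expm1_pow_mult k A p = exp_subst \<rho> D p"
proof (cases "p < 0")
  case True
  thus ?thesis using expm1_pow_mult_neg[OF A True] by (simp add: exp_subst_def)
next
  case False
  define pn where "pn = nat p"
  define a where "a = of_nat l + \<rho>"
  define \<gamma> where "\<gamma> e = (fps_exp (- a) * fps_expm1 ^ e) $ pn" for e
  have D_finite: "finite {s. scale (c s) (D s) \<noteq> 0}" for c
    by (rule finite_support_int[of "- int l" S]) (auto simp: D_above D_below)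
  have A_finite: "finite {n. scale (ln1p_coeff a k (int e) n) (A n) \<noteq> 0}" for e
    by (rule finite_support_scale[where hi = "int k" and lo = "int k - 1 - int e"])
      (simp_all add: A ln1p_coeff_below)
  have D_coeff: "scale ((of_int s - \<rho>) ^ pn / fact pn) (D s)
      = scale (\<Sum>e=0..pn. \<gamma> e * zp1_coeff (int l + s) (int e)) (D s)" for s
    by (cases "int l + s \<ge> 0") (simp_all add: \<gamma>_def zp1_coeff_expm1_power_sum[OF _ a_def] D_below)
  have A_coeff: "scale (\<Sum>e=0..pn. \<gamma> e * ln1p_coeff a k (int e) n) (A n)
      = scale (expm1_kernel k n $ pn) (A n)" for n
    by (cases "n < int k") (simp_all add: \<gamma>_def ln1p_coeff_expm1_power_sum A)
  have "exp_subst \<rho> D p = Sum_any (\<lambda>s. scale (\<Sum>e=0..pn. \<gamma> e * zp1_coeff (int l + s) (int e)) (D s))"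
    using False by (simp add: exp_subst_def pn_def[symmetric] D_coeff)
  also have "\<dots> = (\<Sum>e=0..pn. scale (\<gamma> e) (zp1_subst l D (int e)))"
    unfolding zp1_subst_def by (rule Sum_any_scale_sum_swap) (simp, rule D_finite)
  also have "\<dots> = (\<Sum>e=0..pn. scale (\<gamma> e) (Sum_any (\<lambda>n. scale (ln1p_coeff a k (int e) n) (A n))))"
    by (simp add: eq ln1p_subst_def a_def)
  also have "\<dots> = Sum_any (\<lambda>n. scale (\<Sum>e=0..pn. \<gamma> e * ln1p_coeff a k (int e) n) (A n))"
    by (rule Sum_any_scale_sum_swap[symmetric]) (simp, rule A_finite)
  also have "\<dots> = expm1_pow_mult k A p"
    using expm1_pow_mult_eq_kernel_sum[where A = A, OF A] False by (simp add: pn_def[symmetric] A_coeff)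
  finally show ?thesis ..
qed

text \<open>Substituting \<open>x = log(1 + z)\<close>, coefficientwise.\<close>
lemma zp1_subst_eq_ln1p_subst:
  assumes D_above: "\<And>s. s > S \<Longrightarrow> D s = 0" and D_below: "\<And>s. int l + s < 0 \<Longrightarrow> D s = 0"
    and A: "\<And>n. n \<ge> int k \<Longrightarrow> A n = 0"
    and eq: "\<And>p. expm1_pow_mult k A p = exp_subst \<rho> D p"
  shows "zp1_subst l D e = ln1p_subst (of_nat l + \<rho>) k A e"
proof (cases "e < 0")
  case True
  have "scale (zp1_coeff (int l + s) e) (D s) = 0" for s
    using True D_below[of s] by (cases "int l + s < 0") (auto simp: zp1_coeff_nonneg)
  thus ?thesis
    using True by (simp add: zp1_subst_def ln1p_subst_neg Sum_any_eq_zero)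
next
  case False
  define a where "a = of_nat l + \<rho>"
  define \<delta> where "\<delta> p = (fps_binomial a * fps_ln1p ^ p) $ nat e" for p
  define c where "c p s = (of_int s - \<rho>) ^ p / fact p" for p and s :: int
  have D_finite: "finite {s. scale (f s) (D s) \<noteq> 0}" for f
    by (rule finite_support_int[of "- int l" S]) (auto simp: D_above D_below)
  have A_finite: "finite {n. scale (expm1_kernel k n $ p) (A n) \<noteq> 0}" for p
    by (rule finite_support_scale[where hi = "int k" and lo = "int k - 1 - int p"])
      (simp_all add: A expm1_kernel_nth_below)
  have D_coeff: "scale (zp1_coeff (int l + s) e) (D s) = scale (\<Sum>p=0..nat e. \<delta> p * c p s) (D s)" for s
    using False
    by (cases "int l + s \<ge> 0") (simp_all add: \<delta>_def c_def zp1_coeff_ln1p_power_sum[OF _ _ a_def] D_below)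
  have A_coeff: "scale (\<Sum>p=0..nat e. \<delta> p * expm1_kernel k n $ p) (A n) = scale (ln1p_coeff a k e n) (A n)"
    for n
    using False by (cases "n < int k") (simp_all add: \<delta>_def expm1_kernel_ln1p_power_sum A)
  have "zp1_subst l D e = Sum_any (\<lambda>s. scale (\<Sum>p=0..nat e. \<delta> p * c p s) (D s))"
    by (simp add: zp1_subst_def D_coeff)
  also have "\<dots> = (\<Sum>p=0..nat e. scale (\<delta> p) (exp_subst \<rho> D (int p)))"
    by (subst Sum_any_scale_sum_swap) (simp, rule D_finite, simp add: exp_subst_def c_def)
  also have "\<dots> = (\<Sum>p=0..nat e. scale (\<delta> p) (Sum_any (\<lambda>n. scale (expm1_kernel k n $ p) (A n))))"
    by (simp add: eq[symmetric] expm1_pow_mult_eq_kernel_sum[OF A])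
  also have "\<dots> = Sum_any (\<lambda>n. scale (\<Sum>p=0..nat e. \<delta> p * expm1_kernel k n $ p) (A n))"
    by (rule Sum_any_scale_sum_swap[symmetric]) (simp, rule A_finite)
  finally show ?thesis
    by (simp add: ln1p_subst_def a_def A_coeff)
qed

lemma zp1_identity_imp_exp_identity:
  assumes H: "\<And>s. s > S \<Longrightarrow> H s = 0" and A: "\<And>n. n \<ge> int k \<Longrightarrow> A n = 0"
    and eq: "\<And>e. zp1_subst l H e = ln1p_subst (of_nat l + \<rho>) k A (e + int k)"
  shows "int l + s < 0 \<Longrightarrow> xm1_pow_mult k H s = 0"
    and "expm1_pow_mult k A p = exp_subst \<rho> (xm1_pow_mult k H) p"
proof -
  have D_eq: "zp1_subst l (xm1_pow_mult k H) e = ln1p_subst (of_nat l + \<rho>) k A e" for e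
    using zp1_subst_xm1_pow_mult[OF H, where l = l and k = k and e = e] eq[of "e - int k"] by simp
  have D_low: "xm1_pow_mult k H s = 0" if "int l + s < 0" for s
    by (rule zp1_subst_neg_imp_vanishing[OF _ that]) (simp add: D_eq ln1p_subst_neg)
  show "int l + s < 0 \<Longrightarrow> xm1_pow_mult k H s = 0"
    by (rule D_low)
  show "expm1_pow_mult k A p = exp_subst \<rho> (xm1_pow_mult k H) p"
    by (rule expm1_pow_mult_eq_exp_subst[OF xm1_pow_mult_above[OF H] D_low A D_eq])
qed

lemma exp_identity_imp_zp1_identity:
  assumes H: "\<And>s. s > S \<Longrightarrow> H s = 0" and A: "\<And>n. n \<ge> N \<Longrightarrow> A n = 0"
    and D_low: "\<And>s. int l + s < 0 \<Longrightarrow> xm1_pow_mult k H s = 0"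
    and eq: "\<And>p. expm1_pow_mult k A p = exp_subst \<rho> (xm1_pow_mult k H) p"
  shows "n \<ge> int k \<Longrightarrow> A n = 0"
    and "zp1_subst l H e = ln1p_subst (of_nat l + \<rho>) k A (e + int k)"
proof -
  have A_k: "A n = 0" if "n \<ge> int k" for n
  proof (rule expm1_pow_mult_vanishes_high[OF A _ that])
    fix p :: int
    assume "p < 0"
    thus "expm1_pow_mult k A p = 0"
      by (simp add: eq exp_subst_def)
  qed
  thus "n \<ge> int k \<Longrightarrow> A n = 0" .
  have "zp1_subst l (xm1_pow_mult k H) (e + int k) = ln1p_subst (of_nat l + \<rho>) k A (e + int k)"
    by (rule zp1_subst_eq_ln1p_subst[OF xm1_pow_mult_above[OF H] D_low A_k eq])
  thus "zp1_subst l H e = ln1p_subst (of_nat l + \<rho>) k A (e + int k)"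
    using zp1_subst_xm1_pow_mult[OF H, where l = l and k = k and e = "e + int k"] by simp
qed

end

section \<open>Twisted fields\<close>

lemma exp_2pi_i_eq_1_iff:
  assumes "T > (0::nat)"
  shows "exp (2 * pi * \<i> * of_int m / of_nat T) = 1 \<longleftrightarrow> int T dvd m"
proof -
  define \<theta> where "\<theta> = 2 * pi * real_of_int m / real T"
  have exp_cis: "exp (2 * pi * \<i> * of_int m / of_nat T) = cis \<theta>"
    by (simp add: cis_conv_exp \<theta>_def mult.commute mult.left_commute)
  show ?thesis
  proof
    assume "exp (2 * pi * \<i> * of_int m / of_nat T) = 1"
    hence "cos \<theta> = 1"
      using exp_cis by (metis cis.sel(1) one_complex.sel(1))
    then obtain n :: int where "\<theta> = real_of_int n * 2 * pi"
      by (auto simp: cos_one_2pi_int)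
    hence "real_of_int m = real_of_int n * real T"
      using assms by (simp add: \<theta>_def field_simps)
    hence "m = n * int T"
      by (metis of_int_eq_iff of_int_mult of_int_of_nat_eq)
    thus "int T dvd m" by simp
  next
    assume "int T dvd m"
    then obtain n where "m = int T * n" ..
    hence "\<theta> = 2 * pi * real_of_int n"
      using assms by (simp add: \<theta>_def)
    thus "exp (2 * pi * \<i> * of_int m / of_nat T) = 1"
      using exp_cis by simp
  qed
qed

lemma in_W_two_var_add:
  assumes "in_W_two_var F1" and "in_W_two_var F2"
  shows "in_W_two_var (\<lambda>i j. F1 i j + (F2 i j :: 'w::monoid_add))"
proof -
  obtain N1 N2 where "\<forall>i j. i < N1 \<or> j < N1 \<longrightarrow> F1 i j = 0"
    and "\<forall>i j. i < N2 \<or> j < N2 \<longrightarrow> F2 i j = 0"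
    using assms by (auto simp: in_W_two_var_def)
  thus ?thesis
    unfolding in_W_two_var_def by (intro exI[of _ "min N1 N2"]) auto
qed

lemma sum_roots_of_unity_powers:
  assumes "T > (0::nat)" and "t < T"
  shows "(\<Sum>r<T. exp (2 * pi * \<i> * of_nat r * of_nat t / of_nat T)) = (if t = 0 then of_nat T else 0)"
proof (cases "t = 0")
  case False
  define z where "z = exp (2 * pi * \<i> * of_int (int t) / of_nat T)"
  have power: "exp (2 * pi * \<i> * of_nat r * of_nat t / of_nat T) = z ^ r" for r
  proof -
    have "2 * pi * \<i> * of_nat r * of_nat t / of_nat T = of_nat r * (2 * pi * \<i> * of_int (int t) / of_nat T)"
      by simp
    thus ?thesis by (simp only: z_def exp_of_nat_mult)
  qed
  have "z \<noteq> 1"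
  proof
    assume "z = 1"
    hence "int T dvd int t"
      using exp_2pi_i_eq_1_iff[OF assms(1), of "int t"] unfolding z_def by blast
    hence "T dvd t"
      by (simp only: of_nat_dvd_iff)
    thus False
      using False assms(2) by (simp add: nat_dvd_not_less)
  qed
  moreover have "z ^ T = 1"
  proof -
    have "z ^ T = exp (2 * pi * \<i> * of_int (int (T * t)) / of_nat T)"
      by (simp only: power[symmetric]) simp
    also have "\<dots> = 1"
      by (subst exp_2pi_i_eq_1_iff[OF assms(1)]) simp
    finally show ?thesis .
  qed
  ultimately have "(\<Sum>r<T. z ^ r) = 0"
    by (simp add: sum_gp_strict)
  thus ?thesis
    using False by (simp only: power) simp
qed simp

lemma sum_lessThan_rotate:
  assumes "f T = f 0"
  shows "(\<Sum>t<T. f (Suc t)) = (\<Sum>t<T. (f t :: 'a::cancel_comm_monoid_add))"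
proof -
  have "f 0 + (\<Sum>t<T. f (Suc t)) = (\<Sum>t<Suc T. f t)"
    by (rule sum.lessThan_Suc_shift[symmetric])
  also have "\<dots> = (\<Sum>t<T. f t) + f 0"
    using assms by simp
  finally show ?thesis
    by (simp add: add.commute)
qed

locale twisted_fields =
  fixes smul :: "complex \<Rightarrow> 'v::ab_group_add \<Rightarrow> 'v"
    and Y :: "'v \<Rightarrow> 'v \<Rightarrow> int \<Rightarrow> 'v" and vac :: 'v
    and g :: "'v \<Rightarrow> 'v" and T :: nat
    and smulW :: "complex \<Rightarrow> 'w::ab_group_add \<Rightarrow> 'w"
    and YW :: "'v \<Rightarrow> 'w \<Rightarrow> int \<Rightarrow> 'w"
  assumes VA: "vertex_algebra smul Y vac"
    and aut: "va_automorphism smul Y vac g"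
    and T_pos: "T > 0" and order: "g ^^ T = id"
    and YW: "twisted_field_map smul smulW vac g T YW"
begin

sublocale V: char_0_vector_space smul
  using VA by (simp add: char_0_vector_space_def vertex_algebra_def)

sublocale W: char_0_vector_space smulW
  using YW by (simp add: char_0_vector_space_def twisted_field_map_def)

lemma YW_add: "YW (u1 + u2) w j = YW u1 w j + YW u2 w j"
  using YW by (simp add: twisted_field_map_def Vector_Spaces.linear_iff)

lemma YW_scale: "YW (smul c u) w j = smulW c (YW u w j)"
  using YW by (simp add: twisted_field_map_def Vector_Spaces.linear_iff)

lemma YW_zero_left [simp]: "YW 0 w j = 0"
  using YW_scale[of 0 0 w j] by simp

lemma YW_zero_right [simp]: "YW v 0 j = 0"
proof -
  have "YW v (0 + 0) j = YW v 0 j + YW v 0 j"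
    using YW by (simp only: twisted_field_map_def Vector_Spaces.linear_iff)
  thus ?thesis by simp
qed

lemma YW_vanishes_below: "\<exists>N. \<forall>j<N. YW v w j = 0"
  using YW by (simp add: twisted_field_map_def)

lemma YW_g: "YW (g v) w j = smulW (exp (2 * pi * \<i> * of_int j / of_nat T)) (YW v w j)"
  using YW by (simp add: twisted_field_map_def)

lemma Y_add: "Y (u1 + u2) v n = Y u1 v n + Y u2 v n"
  using VA by (simp add: vertex_algebra_def Vector_Spaces.linear_iff)

lemma Y_vanishes_above: "\<exists>N. \<forall>n\<ge>N. Y u v n = 0"
  using VA by (simp add: vertex_algebra_def)

lemma YW_eigenvector_support:
  assumes u: "u \<in> eigenspace_Vr smul g T r" and "YW u w j \<noteq> 0"
  shows "int T dvd j + int r"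
proof -
  have "smulW (exp (- 2 * pi * \<i> * of_nat r / of_nat T)) (YW u w j)
      = smulW (exp (2 * pi * \<i> * of_int j / of_nat T)) (YW u w j)"
    using u YW_g[of u w j] by (simp add: eigenspace_Vr_def YW_scale)
  hence eigenvalue: "exp (- 2 * pi * \<i> * of_nat r / of_nat T) = exp (2 * pi * \<i> * of_int j / of_nat T)"
    using \<open>YW u w j \<noteq> 0\<close> by simp
  have "2 * pi * \<i> * of_int (j + int r) / of_nat T
      = 2 * pi * \<i> * of_int j / of_nat T - (- 2 * pi * \<i> * of_nat r / of_nat T)"
    using T_pos by (simp add: field_simps)
  hence "exp (2 * pi * \<i> * of_int (j + int r) / of_nat T)
      = exp (2 * pi * \<i> * of_int j / of_nat T) / exp (- 2 * pi * \<i> * of_nat r / of_nat T)"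
    by (simp only: exp_diff)
  also have "\<dots> = 1"
    using eigenvalue by simp
  finally show ?thesis
    using exp_2pi_i_eq_1_iff[OF T_pos] by blast
qed

text \<open>For \<open>u \<in> V^r\<close> only the powers \<open>x\<^sub>1^(i/T)\<close> with \<open>i = T s - r\<close> occur in
  \<open>Y\<^sub>W(u, x\<^sub>1) Y\<^sub>W(v, x\<^sub>2) w\<close>. Fixing the total exponent \<open>c/T\<close>, the coefficients of the
  product and of \<open>Y\<^sub>W(Y(u, x\<^sub>0) v, x\<^sub>2) w\<close> become sequences indexed by \<open>s\<close> and by \<open>n\<close>.\<close>
definition diag_coeff :: "nat \<Rightarrow> 'v \<Rightarrow> 'v \<Rightarrow> 'w \<Rightarrow> int \<Rightarrow> int \<Rightarrow> 'w" where
  "diag_coeff r u v w c s = YW u (YW v w (c - (int T * s - int r))) (int T * s - int r)"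

definition iterate_coeff :: "'v \<Rightarrow> 'v \<Rightarrow> 'w \<Rightarrow> int \<Rightarrow> int \<Rightarrow> 'w" where
  "iterate_coeff u v w c n = YW (Y u v n) w c"

lemma diag_coeff_vanishes_above: "\<exists>S. \<forall>s>S. diag_coeff r u v w c s = 0"
proof -
  obtain N where N: "\<forall>j<N. YW v w j = 0"
    using YW_vanishes_below by blast
  have "diag_coeff r u v w c s = 0" if s: "s > \<bar>c + int r - N\<bar>" for s
  proof -
    have "s > 0"
      using s by (meson abs_ge_zero le_less_trans)
    hence "int T * s \<ge> 1 * s"
      using T_pos by (intro mult_right_mono) auto
    hence "c - (int T * s - int r) < N"
      using s by linarith
    thus ?thesis using N by (simp add: diag_coeff_def)
  qed
  thus ?thesis by blast
qed

lemma prodk_off_residue_class: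
  assumes u: "u \<in> eigenspace_Vr smul g T r" and "\<not> int T dvd i + int r"
  shows "prodk smulW T YW k u v w i j = 0"
proof -
  have "YW u (YW v w (j - int T * int m)) (i - int T * int (k - m)) = 0" for m
  proof (rule ccontr)
    assume "\<not> ?thesis"
    hence "int T dvd (i - int T * int (k - m)) + int r"
      by (rule YW_eigenvector_support[OF u])
    hence "int T dvd (i + int r) - int T * int (k - m)"
      by (simp add: algebra_simps)
    hence "int T dvd i + int r"
      by (simp add: dvd_diff_left_iff)
    thus False using assms(2) by simp
  qed
  thus ?thesis
    unfolding prodk_def by (intro sum.neutral ballI) (simp only: W.scale_zero_right)
qed

lemma prodk_vanishes_below:
  assumes "\<forall>j<N. YW v w j = 0" and "j < N"
  shows "prodk smulW T YW k u v w i j = 0"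
proof -
  have "YW v w (j - int T * int m) = 0" for m
  proof -
    have "int T * int m \<ge> 0"
      by simp
    hence "j - int T * int m < N"
      using assms(2) by linarith
    thus ?thesis using assms(1) by simp
  qed
  thus ?thesis by (simp add: prodk_def)
qed

lemma prodk_eq_xm1_pow_mult:
  "prodk smulW T YW k u v w (int T * s - int r) j
   = W.xm1_pow_mult k (diag_coeff r u v w (int T * s - int r + j - int T * int k)) s"
  unfolding prodk_def W.xm1_pow_mult_def
proof (rule sum.cong[OF refl])
  fix m assume "m \<in> {..k}"
  hence "int T * s - int r - int T * int (k - m) = int T * (s - int k + int m) - int r"
    by (simp add: of_nat_diff algebra_simps)
  moreover have "int T * s - int r + j - int T * int k - (int T * (s - int k + int m) - int r)
      = j - int T * int m"
    by (simp add: algebra_simps)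
  ultimately show "smulW ((- 1) ^ m * of_nat (k choose m))
        (YW u (YW v w (j - int T * int m)) (int T * s - int r - int T * int (k - m)))
      = smulW ((- 1) ^ m * of_nat (k choose m))
        (diag_coeff r u v w (int T * s - int r + j - int T * int k) (s - int k + int m))"
    by (simp only: diag_coeff_def)
qed

lemma assoc_lhs_eq_expm1_pow_mult:
  "assoc_lhs smulW Y T YW k u v w p m = W.expm1_pow_mult k (iterate_coeff u v w (m - int T * int k)) p"
  by (simp add: assoc_lhs_def W.expm1_pow_mult_def iterate_coeff_def fps_expm1_def)

lemma subst_x1_eq_exp_subst:
  assumes u: "u \<in> eigenspace_Vr smul g T r"
  shows "subst_x1 smulW T (prodk smulW T YW k u v w) p m
       = W.exp_subst (of_nat r / of_nat T) (W.xm1_pow_mult k (diag_coeff r u v w (m - int T * int k))) p"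
proof (cases "p < 0")
  case True
  thus ?thesis by (simp add: subst_x1_def W.exp_subst_def)
next
  case False
  let ?f = "\<lambda>i. smulW ((of_int i / of_nat T) ^ nat p / of_nat (fact (nat p))) (prodk smulW T YW k u v w i (m - i))"
  have "Sum_any ?f = Sum_any (\<lambda>s. ?f (int T * s - int r))"
    by (rule Sum_any_reindex_residue_class[OF T_pos]) (use prodk_off_residue_class[OF u] in fastforce)
  also have "\<dots> = Sum_any (\<lambda>s. smulW ((of_int s - of_nat r / of_nat T) ^ nat p / fact (nat p))
                       (W.xm1_pow_mult k (diag_coeff r u v w (m - int T * int k)) s))"
  proof (rule Sum_any.cong)
    fix s
    have "of_int (int T * s - int r) / (of_nat T :: complex) = of_int s - of_nat r / of_nat T"
      using T_pos by (simp add: field_simps)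
    moreover have "int T * s - int r + (m - (int T * s - int r)) - int T * int k = m - int T * int k"
      by simp
    ultimately show "?f (int T * s - int r) = smulW ((of_int s - of_nat r / of_nat T) ^ nat p / fact (nat p))
                       (W.xm1_pow_mult k (diag_coeff r u v w (m - int T * int k)) s)"
      by (simp only: prodk_eq_xm1_pow_mult of_nat_fact)
  qed
  finally show ?thesis
    using False by (simp add: subst_x1_def W.exp_subst_def)
qed

lemma phi_lhs_off_residue_class:
  assumes u: "u \<in> eigenspace_Vr smul g T r" and "\<not> int T dvd e"
  shows "phi_lhs smulW T YW l r u v w e c = 0"
proof -
  have "YW u (YW v w (c - j)) j = 0" if "j = e - int l * int T - int r + int K * int T" for j K
  proof (rule ccontr)
    assume "YW u (YW v w (c - j)) j \<noteq> 0"
    hence "int T dvd j + int r"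
      by (rule YW_eigenvector_support[OF u])
    hence "int T dvd e + int T * (int K - int l)"
      using that by (simp add: algebra_simps)
    thus False
      using assms(2) by (simp add: dvd_add_left_iff)
  qed
  thus ?thesis
    by (simp add: phi_lhs_def Let_def Sum_any_eq_zero)
qed

text \<open>The two binomial factors combine by Vandermonde's identity.\<close>
lemma phi_lhs_eq_zp1_subst:
  "phi_lhs smulW T YW l r u v w (int T * e) c = W.zp1_subst l (diag_coeff r u v w c) e"
proof -
  define j where "j K = int T * e - int l * int T - int r + int K * int T" for K :: nat
  have j_eq: "j K = int T * (e - int l + int K) - int r" for K
    by (simp add: j_def algebra_simps)
  obtain S where S: "\<forall>s>S. diag_coeff r u v w c s = 0"
    using diag_coeff_vanishes_above by blast
  have coeff: "(\<Sum>i\<le>K. ((of_nat l + of_nat r / of_nat T :: complex) gchoose i)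
        * ((of_int (j K) / of_nat T) gchoose (K - i))) = zp1_coeff (e + int K) e" for K
  proof -
    have "(of_nat l + of_nat r / of_nat T) + of_int (j K) / (of_nat T :: complex) = of_int (e + int K)"
      using T_pos by (simp add: j_eq field_simps)
    thus ?thesis
      by (simp add: atMost_atLeast0 gbinomial_Vandermonde zp1_coeff_def)
  qed
  have "phi_lhs smulW T YW l r u v w (int T * e) c
      = Sum_any (\<lambda>K::nat. smulW (\<Sum>i\<le>K. ((of_nat l + of_nat r / of_nat T :: complex) gchoose i)
          * ((of_int (j K) / of_nat T) gchoose (K - i))) (YW u (YW v w (c - j K)) (j K)))"
    by (simp add: phi_lhs_def Let_def j_def)
  also have "\<dots> = Sum_any (\<lambda>K::nat. smulW (zp1_coeff (e + int K) e) (diag_coeff r u v w c (e - int l + int K)))"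
    unfolding coeff by (simp only: diag_coeff_def j_eq)
  also have "\<dots> = Sum_any (\<lambda>s. if s \<ge> e - int l
      then smulW (zp1_coeff (e + int (nat (s - (e - int l)))) e)
             (diag_coeff r u v w c (e - int l + int (nat (s - (e - int l))))) else 0)"
    by (rule Sum_any_nat_as_int[of "nat (S - e + int l + 1)"]) (simp add: S)
  also have "\<dots> = W.zp1_subst l (diag_coeff r u v w c) e"
    unfolding W.zp1_subst_def
    by (rule Sum_any.cong) (auto simp: zp1_coeff_above algebra_simps)
  finally show ?thesis .
qed

lemma phi_rhs_eq_ln1p_subst:
  assumes A: "\<And>n. n \<ge> int k \<Longrightarrow> iterate_coeff u v w c n = 0"
  shows "phi_rhs smulW Y T YW l r u v w (int T * e) c
       = W.ln1p_subst (of_nat l + of_nat r / of_nat T) k (iterate_coeff u v w c) (e + int k)"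
proof -
  define a where "a = (of_nat l + of_nat r / of_nat T :: complex)"
  define L where "L n = fps_to_fls (fps_ln1p :: complex fps) powi (- n - 1)" for n
  define G where "G i n = smulW ((a gchoose i) * fls_nth (L n) (e - int i)) (iterate_coeff u v w c n)"
    for i :: nat and n :: int
  have L_nth: "fls_nth (L n) t = 0" if "t < - n - 1" for n t
    using that by (simp add: L_def fps_ln1p_powi_nth)
  have G_zero: "G i n = 0" if "\<not> (i \<le> nat (e + int k) \<and> n \<in> {- e - 1..int k})" for i n
  proof (cases "n < int k")
    case True
    hence "e - int i < - n - 1"
      using that by auto
    thus ?thesis by (simp add: G_def L_nth)
  qed (simp add: G_def A)
  have box: "{i. \<exists>n. G i n \<noteq> 0} \<times> {n. \<exists>i. G i n \<noteq> 0}
      \<subseteq> {..nat (e + int k)} \<times> {- e - 1..int k}"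
    using G_zero by blast
  have "phi_rhs smulW Y T YW l r u v w (int T * e) c = Sum_any (\<lambda>(i, n). G i n)"
    using T_pos by (simp add: phi_rhs_def G_def a_def L_def iterate_coeff_def fps_ln1p_def)
  also have "\<dots> = Sum_any (\<lambda>n. Sum_any (\<lambda>i. G i n))"
    by (subst Sum_any.cartesian_product[symmetric, OF _ box]) (simp_all add: Sum_any.swap[OF _ box])
  also have "\<dots> = Sum_any (\<lambda>n. smulW (ln1p_coeff a k (e + int k) n) (iterate_coeff u v w c n))"
  proof (rule Sum_any.cong)
    fix n
    show "Sum_any (\<lambda>i. G i n) = smulW (ln1p_coeff a k (e + int k) n) (iterate_coeff u v w c n)"
    proof (cases "n < int k")
      case True
      have "finite {i. (a gchoose i) * fls_nth (L n) (e - int i) \<noteq> 0}"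
        by (rule finite_support_nat[of "nat (e + int k)"]) (use True in \<open>auto intro: L_nth\<close>)
      hence "Sum_any (\<lambda>i. G i n)
          = smulW (Sum_any (\<lambda>i. (a gchoose i) * fls_nth (L n) (e - int i))) (iterate_coeff u v w c n)"
        unfolding G_def by (rule W.scale_Sum_any_left[symmetric])
      thus ?thesis
        using ln1p_coeff_eq_Sum_any[OF True, of a e] by (simp add: L_def)
    qed (simp add: G_def A)
  qed
  finally show ?thesis
    by (simp add: W.ln1p_subst_def a_def)
qed

lemma diag_vanishing_of_in_W_two_var:
  assumes "in_W_two_var (prodk smulW T YW k u v w)"
  shows "\<exists>l. \<forall>c s. int l + s < 0 \<longrightarrow> W.xm1_pow_mult k (diag_coeff r u v w c) s = 0"
proof -
  obtain N where N: "\<And>i j. i < N \<or> j < N \<Longrightarrow> prodk smulW T YW k u v w i j = 0"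
    using assms unfolding in_W_two_var_def by blast
  have "W.xm1_pow_mult k (diag_coeff r u v w c) s = 0" if "int (nat \<bar>N\<bar>) + s < 0" for c s
  proof -
    have "int T * s \<le> 1 * s"
      using T_pos that by (intro mult_right_mono_neg) auto
    hence "int T * s - int r < N"
      using that by linarith
    hence "prodk smulW T YW k u v w (int T * s - int r) (c + int T * int k - (int T * s - int r)) = 0"
      using N by blast
    thus ?thesis by (simp add: prodk_eq_xm1_pow_mult)
  qed
  thus ?thesis by blast
qed

lemma assoc_imp_phi_assoc:
  assumes u: "u \<in> eigenspace_Vr smul g T r"
    and inW: "in_W_two_var (prodk smulW T YW k u v w)"
    and assoc: "assoc_lhs smulW Y T YW k u v w = subst_x1 smulW T (prodk smulW T YW k u v w)"
  shows "\<exists>l. phi_lhs smulW T YW l r u v w = phi_rhs smulW Y T YW l r u v w"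
proof -
  obtain l where D_low: "\<And>c s. int l + s < 0 \<Longrightarrow> W.xm1_pow_mult k (diag_coeff r u v w c) s = 0"
    using diag_vanishing_of_in_W_two_var[OF inW] by blast
  obtain N where "\<forall>n\<ge>N. Y u v n = 0"
    using Y_vanishes_above by blast
  hence A: "\<And>c n. n \<ge> N \<Longrightarrow> iterate_coeff u v w c n = 0"
    by (simp add: iterate_coeff_def)
  have on_residue_class:
    "phi_lhs smulW T YW l r u v w (int T * e) c = phi_rhs smulW Y T YW l r u v w (int T * e) c" for e c
  proof -
    obtain S where "\<forall>s>S. diag_coeff r u v w c s = 0"
      using diag_coeff_vanishes_above by blast
    hence H: "\<And>s. s > S \<Longrightarrow> diag_coeff r u v w c s = 0"
      by blast
    have exp_eq: "W.expm1_pow_mult k (iterate_coeff u v w c) p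
        = W.exp_subst (of_nat r / of_nat T) (W.xm1_pow_mult k (diag_coeff r u v w c)) p" for p
      using fun_cong[OF fun_cong[OF assoc, of p], of "c + int T * int k"]
      by (simp add: assoc_lhs_eq_expm1_pow_mult subst_x1_eq_exp_subst[OF u])
    have A_k: "iterate_coeff u v w c n = 0" if "n \<ge> int k" for n
      using H A D_low exp_eq that by (rule W.exp_identity_imp_zp1_identity(1))
    have "W.zp1_subst l (diag_coeff r u v w c) e
        = W.ln1p_subst (of_nat l + of_nat r / of_nat T) k (iterate_coeff u v w c) (e + int k)"
      using H A D_low exp_eq by (rule W.exp_identity_imp_zp1_identity(2))
    thus ?thesis
      by (simp add: phi_lhs_eq_zp1_subst phi_rhs_eq_ln1p_subst[OF A_k])
  qed
  have "phi_lhs smulW T YW l r u v w e c = phi_rhs smulW Y T YW l r u v w e c" for e c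
  proof (cases "int T dvd e")
    case True
    then obtain e' where "e = int T * e'" ..
    thus ?thesis by (simp add: on_residue_class)
  next
    case False
    thus ?thesis by (simp add: phi_lhs_off_residue_class[OF u] phi_rhs_def)
  qed
  thus ?thesis by (auto simp: fun_eq_iff)
qed

lemma prodk_in_W_two_var:
  assumes u: "u \<in> eigenspace_Vr smul g T r"
    and D_low: "\<And>c s. int l + s < 0 \<Longrightarrow> W.xm1_pow_mult k (diag_coeff r u v w c) s = 0"
  shows "in_W_two_var (prodk smulW T YW k u v w)"
proof -
  obtain N where N: "\<forall>j<N. YW v w j = 0"
    using YW_vanishes_below by blast
  have "prodk smulW T YW k u v w i j = 0" if "i < min N (- int l * int T - int r) \<or> j < N" for i j
  proof (cases "int T dvd i + int r")
    case False
    thus ?thesis by (rule prodk_off_residue_class[OF u])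
  next
    case True
    then obtain s where s: "i + int r = int T * s" ..
    show ?thesis
    proof (cases "j < N")
      case True
      thus ?thesis by (rule prodk_vanishes_below[OF N])
    next
      case False
      hence "int T * s < int T * (- int l)"
        using that s by (simp add: algebra_simps)
      hence "s < - int l"
        using mult_less_cancel_left_pos[of "int T" s "- int l"] T_pos by simp
      hence "int l + s < 0"
        by simp
      moreover have "i = int T * s - int r"
        using s by simp
      ultimately show ?thesis
        using D_low by (simp add: prodk_eq_xm1_pow_mult)
    qed
  qed
  thus ?thesis
    unfolding in_W_two_var_def by (intro exI[of _ "min N (- int l * int T - int r)"]) auto
qed

lemma phi_assoc_imp_assoc_eigen:
  assumes u: "u \<in> eigenspace_Vr smul g T r"
    and Y_k: "\<And>n. n \<ge> int k \<Longrightarrow> Y u v n = 0"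
    and phi: "phi_lhs smulW T YW l r u v w = phi_rhs smulW Y T YW l r u v w"
  shows "in_W_two_var (prodk smulW T YW k u v w)"
    and "assoc_lhs smulW Y T YW k u v w = subst_x1 smulW T (prodk smulW T YW k u v w)"
proof -
  have A: "\<And>n. n \<ge> int k \<Longrightarrow> iterate_coeff u v w c n = 0" for c
    by (simp add: iterate_coeff_def Y_k)
  have zp1_eq: "W.zp1_subst l (diag_coeff r u v w c) e
      = W.ln1p_subst (of_nat l + of_nat r / of_nat T) k (iterate_coeff u v w c) (e + int k)" for c e
    using fun_cong[OF fun_cong[OF phi, of "int T * e"], of c]
    by (simp add: phi_lhs_eq_zp1_subst phi_rhs_eq_ln1p_subst[OF A])
  have H: "\<exists>S. \<forall>s>S. diag_coeff r u v w c s = 0" for c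
    by (rule diag_coeff_vanishes_above)
  have D_low: "W.xm1_pow_mult k (diag_coeff r u v w c) s = 0" if "int l + s < 0" for c s
    using H[of c] W.zp1_identity_imp_exp_identity(1)[OF _ A zp1_eq that] by blast
  have exp_eq: "W.expm1_pow_mult k (iterate_coeff u v w c) p
      = W.exp_subst (of_nat r / of_nat T) (W.xm1_pow_mult k (diag_coeff r u v w c)) p" for c p
    using H[of c] W.zp1_identity_imp_exp_identity(2)[OF _ A zp1_eq] by blast
  show "in_W_two_var (prodk smulW T YW k u v w)"
    by (rule prodk_in_W_two_var[OF u D_low])
  show "assoc_lhs smulW Y T YW k u v w = subst_x1 smulW T (prodk smulW T YW k u v w)"
    by (simp add: fun_eq_iff assoc_lhs_eq_expm1_pow_mult subst_x1_eq_exp_subst[OF u] exp_eq)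
qed

lemma g_add: "g (x + y) = g x + g y"
  using aut by (simp add: va_automorphism_def Vector_Spaces.linear_iff)

lemma g_scale: "g (smul c x) = smul c (g x)"
  using aut by (simp add: va_automorphism_def Vector_Spaces.linear_iff)

lemma g_zero: "g 0 = 0"
  using g_scale[of 0 0] by simp

lemma g_sum: "g (sum f A) = (\<Sum>a\<in>A. g (f a))"
  by (induction A rule: infinite_finite_induct) (simp_all add: g_zero g_add)

definition eigen_proj :: "nat \<Rightarrow> 'v \<Rightarrow> 'v" where
  "eigen_proj r u = smul (1 / of_nat T)
     (\<Sum>t<T. smul (exp (2 * pi * \<i> * of_nat r * of_nat t / of_nat T)) ((g ^^ t) u))"

lemma eigen_proj_in_eigenspace: "eigen_proj r u \<in> eigenspace_Vr smul g T r"
proof -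
  define \<alpha> where "\<alpha> = exp (- 2 * pi * \<i> * of_nat r / of_nat T)"
  define \<omega> where "\<omega> t = exp (2 * pi * \<i> * of_nat r * of_nat t / of_nat T)" for t :: nat
  define f where "f t = smul (\<alpha> * \<omega> t) ((g ^^ t) u)" for t
  have f_Suc: "f (Suc t) = smul (\<omega> t) ((g ^^ Suc t) u)" for t
  proof -
    have "- 2 * pi * \<i> * of_nat r / of_nat T + 2 * pi * \<i> * of_nat r * of_nat (Suc t) / of_nat T
        = (2 * pi * \<i> * of_nat r * of_nat t / of_nat T :: complex)"
      using T_pos by (simp add: field_simps)
    hence "\<alpha> * \<omega> (Suc t) = \<omega> t"
      unfolding \<alpha>_def \<omega>_def by (simp only: exp_add[symmetric])
    thus ?thesis by (simp add: f_def)
  qed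
  have "\<omega> T = 1"
    using exp_2pi_i_eq_1_iff[OF T_pos, of "int (r * T)"] by (simp add: \<omega>_def)
  hence f_T: "f T = f 0"
    by (simp add: f_def order \<omega>_def)
  have "g (eigen_proj r u) = smul (1 / of_nat T) (\<Sum>t<T. smul (\<omega> t) ((g ^^ Suc t) u))"
    by (simp add: eigen_proj_def g_scale g_sum \<omega>_def)
  also have "(\<Sum>t<T. smul (\<omega> t) ((g ^^ Suc t) u)) = (\<Sum>t<T. f t)"
    using sum_lessThan_rotate[of f T, OF f_T] by (simp add: f_Suc)
  also have "smul (1 / of_nat T) (\<Sum>t<T. f t) = smul \<alpha> (eigen_proj r u)"
    by (simp add: eigen_proj_def f_def \<omega>_def V.scale_sum_right mult.commute mult.left_commute)
  finally show ?thesis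
    by (simp add: eigenspace_Vr_def \<alpha>_def)
qed

lemma sum_eigen_proj: "(\<Sum>r<T. eigen_proj r u) = u"
proof -
  have "(\<Sum>r<T. eigen_proj r u) = smul (1 / of_nat T)
      (\<Sum>r<T. \<Sum>t<T. smul (exp (2 * pi * \<i> * of_nat r * of_nat t / of_nat T)) ((g ^^ t) u))"
    by (simp add: eigen_proj_def V.scale_sum_right)
  also have "(\<Sum>r<T. \<Sum>t<T. smul (exp (2 * pi * \<i> * of_nat r * of_nat t / of_nat T)) ((g ^^ t) u))
      = (\<Sum>t<T. smul (\<Sum>r<T. exp (2 * pi * \<i> * of_nat r * of_nat t / of_nat T)) ((g ^^ t) u))"
    by (subst sum.swap) (simp add: V.scale_sum_left)
  also have "\<dots> = (\<Sum>t<T. smul (if t = 0 then of_nat T else 0) ((g ^^ t) u))"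
    by (rule sum.cong[OF refl]) (subst sum_roots_of_unity_powers[OF T_pos], auto)
  also have "\<dots> = (\<Sum>t\<in>{0}. smul (of_nat T) ((g ^^ t) u))"
    by (rule sum.mono_neutral_cong_right) (use T_pos in auto)
  finally show ?thesis
    using T_pos by (simp add: V.scale_scale)
qed

lemma prodk_add:
  "prodk smulW T YW k (u1 + u2) v w i j = prodk smulW T YW k u1 v w i j + prodk smulW T YW k u2 v w i j"
  by (simp add: prodk_def YW_add W.scale_right_distrib sum.distrib)

lemma subst_x1_add:
  assumes "in_W_two_var F1" and "in_W_two_var F2"
  shows "subst_x1 smulW T (\<lambda>i j. F1 i j + F2 i j) p m = subst_x1 smulW T F1 p m + subst_x1 smulW T F2 p m"
proof -
  obtain N1 N2 where N1: "\<forall>i j. i < N1 \<or> j < N1 \<longrightarrow> F1 i j = 0"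
    and N2: "\<forall>i j. i < N2 \<or> j < N2 \<longrightarrow> F2 i j = 0"
    using assms by (auto simp: in_W_two_var_def)
  define c where "c i = ((of_int i / of_nat T) ^ nat p / of_nat (fact (nat p)) :: complex)" for i
  have "finite {i. smulW (c i) (F1 i (m - i)) \<noteq> 0}"
    by (rule finite_support_int[of N1 "m - N1"]) (use N1 in auto)
  moreover have "finite {i. smulW (c i) (F2 i (m - i)) \<noteq> 0}"
    by (rule finite_support_int[of N2 "m - N2"]) (use N2 in auto)
  ultimately have "Sum_any (\<lambda>i. smulW (c i) (F1 i (m - i) + F2 i (m - i)))
      = Sum_any (\<lambda>i. smulW (c i) (F1 i (m - i))) + Sum_any (\<lambda>i. smulW (c i) (F2 i (m - i)))"
    by (simp add: W.scale_right_distrib Sum_any.distrib)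
  thus ?thesis
    by (simp add: subst_x1_def c_def)
qed

lemma assoc_lhs_add:
  assumes "\<And>n. n \<ge> int k \<Longrightarrow> Y u1 v n = 0" and "\<And>n. n \<ge> int k \<Longrightarrow> Y u2 v n = 0"
  shows "assoc_lhs smulW Y T YW k (u1 + u2) v w p m
       = assoc_lhs smulW Y T YW k u1 v w p m + assoc_lhs smulW Y T YW k u2 v w p m"
proof -
  define c where "c q = fps_nth ((fps_exp (1::complex) - 1) ^ k) q" for q
  define x where "x = m - int T * int k"
  have "finite {q. smulW (c q) (YW (Y u1 v (int q - p - 1)) w x) \<noteq> 0}"
    "finite {q. smulW (c q) (YW (Y u2 v (int q - p - 1)) w x) \<noteq> 0}"
    by (rule finite_support_nat[of "nat (int k + p + 1)"], simp add: assms)+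
  hence "Sum_any (\<lambda>q. smulW (c q) (YW (Y u1 v (int q - p - 1)) w x) + smulW (c q) (YW (Y u2 v (int q - p - 1)) w x))
      = Sum_any (\<lambda>q. smulW (c q) (YW (Y u1 v (int q - p - 1)) w x))
        + Sum_any (\<lambda>q. smulW (c q) (YW (Y u2 v (int q - p - 1)) w x))"
    by (rule Sum_any.distrib)
  thus ?thesis
    by (simp add: assoc_lhs_def c_def x_def Y_add YW_add W.scale_right_distrib)
qed

text \<open>The truncation condition on \<open>Y u v\<close> keeps the sums in \<open>assoc_lhs\<close> finite, which
  makes the property additive in \<open>u\<close>.\<close>
definition assoc_of_order :: "nat \<Rightarrow> 'v \<Rightarrow> 'v \<Rightarrow> bool" where
  "assoc_of_order k u v \<longleftrightarrow> (\<forall>n. n \<ge> int k \<longrightarrow> Y u v n = 0) \<and>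
     (\<forall>w. in_W_two_var (prodk smulW T YW k u v w) \<and>
          assoc_lhs smulW Y T YW k u v w = subst_x1 smulW T (prodk smulW T YW k u v w))"

lemma assoc_of_order_zero: "assoc_of_order k 0 v"
  using Y_add[of 0 0 v] by (simp add: assoc_of_order_def prodk_def in_W_two_var_def assoc_lhs_def
      subst_x1_def fun_eq_iff)

lemma assoc_of_order_add:
  assumes "assoc_of_order k u1 v" and "assoc_of_order k u2 v"
  shows "assoc_of_order k (u1 + u2) v"
proof -
  have Y1: "\<And>n. n \<ge> int k \<Longrightarrow> Y u1 v n = 0" and Y2: "\<And>n. n \<ge> int k \<Longrightarrow> Y u2 v n = 0"
    using assms by (auto simp: assoc_of_order_def)
  have sum: "prodk smulW T YW k (u1 + u2) v w
      = (\<lambda>i j. prodk smulW T YW k u1 v w i j + prodk smulW T YW k u2 v w i j)" for w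
    by (simp add: fun_eq_iff prodk_add)
  have "in_W_two_var (prodk smulW T YW k (u1 + u2) v w)
      \<and> assoc_lhs smulW Y T YW k (u1 + u2) v w = subst_x1 smulW T (prodk smulW T YW k (u1 + u2) v w)" for w
    using assms unfolding assoc_of_order_def sum fun_eq_iff
    by (simp add: in_W_two_var_add assoc_lhs_add[OF Y1 Y2] subst_x1_add)
  thus ?thesis
    using Y1 Y2 by (simp add: assoc_of_order_def Y_add)
qed

lemma assoc_of_order_sum:
  "(\<And>r. r \<in> R \<Longrightarrow> assoc_of_order k (f r) v) \<Longrightarrow> assoc_of_order k (sum f R) v"
  by (induction R rule: infinite_finite_induct) (simp_all add: assoc_of_order_zero assoc_of_order_add)

lemma phi_assoc_imp_assoc:
  assumes phi: "\<And>r u w. r < T \<Longrightarrow> u \<in> eigenspace_Vr smul g T r \<Longrightarrow>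
      \<exists>l. phi_lhs smulW T YW l r u v w = phi_rhs smulW Y T YW l r u v w"
  shows "\<exists>k. \<forall>w. in_W_two_var (prodk smulW T YW k u v w) \<and>
      assoc_lhs smulW Y T YW k u v w = subst_x1 smulW T (prodk smulW T YW k u v w)"
proof -
  have "\<forall>r. \<exists>N. \<forall>n\<ge>N. Y (eigen_proj r u) v n = 0"
    using Y_vanishes_above by blast
  then obtain N where N: "\<And>r n. n \<ge> N r \<Longrightarrow> Y (eigen_proj r u) v n = 0"
    by metis
  define k where "k = (\<Sum>r<T. nat (N r))"
  have "assoc_of_order k (eigen_proj r u) v" if "r < T" for r
  proof -
    have "nat (N r) \<le> k"
      unfolding k_def using that by (intro member_le_sum) auto
    hence Y_k: "\<And>n. n \<ge> int k \<Longrightarrow> Y (eigen_proj r u) v n = 0"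
      using N by force
    show ?thesis
      using phi_assoc_imp_assoc_eigen[OF eigen_proj_in_eigenspace Y_k]
        phi[OF that eigen_proj_in_eigenspace] Y_k
      unfolding assoc_of_order_def by blast
  qed
  hence "assoc_of_order k (\<Sum>r<T. eigen_proj r u) v"
    by (intro assoc_of_order_sum) simp
  thus ?thesis
    unfolding sum_eigen_proj assoc_of_order_def by blast
qed

end

theorem lemma2p6:
  fixes smul :: "complex \<Rightarrow> 'v::ab_group_add \<Rightarrow> 'v"
    and Y :: "'v \<Rightarrow> 'v \<Rightarrow> int \<Rightarrow> 'v" and vac :: 'v
    and g :: "'v \<Rightarrow> 'v" and T :: nat
    and smulW :: "complex \<Rightarrow> 'w::ab_group_add \<Rightarrow> 'w"
    and YW :: "'v \<Rightarrow> 'w \<Rightarrow> int \<Rightarrow> 'w"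
  assumes VA: "vertex_algebra smul Y vac"
    and aut: "va_automorphism smul Y vac g"
    and T_pos: "T > 0" and order: "g ^^ T = id"
    and YW: "twisted_field_map smul smulW vac g T YW"
  shows "(\<forall>u v. \<exists>k::nat.
            (\<forall>w. in_W_two_var (prodk smulW T YW k u v w)) \<and>
            (\<forall>w. assoc_lhs smulW Y T YW k u v w = subst_x1 smulW T (prodk smulW T YW k u v w)))
     \<longleftrightarrow>
         (\<forall>r u v w. r < T \<longrightarrow> u \<in> eigenspace_Vr smul g T r \<longrightarrow>
            (\<exists>l::nat. phi_lhs smulW T YW l r u v w = phi_rhs smulW Y T YW l r u v w))"
proof -
  interpret twisted_fields smul Y vac g T smulW YW
    using VA aut T_pos order YW by unfold_locales
  show ?thesis
  proof (intro iffI allI impI)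
    fix r u v w
    assume "\<forall>u v. \<exists>k. (\<forall>w. in_W_two_var (prodk smulW T YW k u v w)) \<and>
      (\<forall>w. assoc_lhs smulW Y T YW k u v w = subst_x1 smulW T (prodk smulW T YW k u v w))"
      and "r < T" and u: "u \<in> eigenspace_Vr smul g T r"
    then obtain k where "in_W_two_var (prodk smulW T YW k u v w)"
      and "assoc_lhs smulW Y T YW k u v w = subst_x1 smulW T (prodk smulW T YW k u v w)"
      by blast
    thus "\<exists>l. phi_lhs smulW T YW l r u v w = phi_rhs smulW Y T YW l r u v w"
      by (rule assoc_imp_phi_assoc[OF u])
  next
    fix u v
    assume "\<forall>r u v w. r < T \<longrightarrow> u \<in> eigenspace_Vr smul g T r \<longrightarrow>
      (\<exists>l. phi_lhs smulW T YW l r u v w = phi_rhs smulW Y T YW l r u v w)"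
    hence "\<exists>k. \<forall>w. in_W_two_var (prodk smulW T YW k u v w) \<and>
      assoc_lhs smulW Y T YW k u v w = subst_x1 smulW T (prodk smulW T YW k u v w)"
      by (intro phi_assoc_imp_assoc) blast
    thus "\<exists>k. (\<forall>w. in_W_two_var (prodk smulW T YW k u v w)) \<and>
      (\<forall>w. assoc_lhs smulW Y T YW k u v w = subst_x1 smulW T (prodk smulW T YW k u v w))"
      by blast
  qed
qed

end
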